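(* For $\Lambda=A\mathds Z^d$ and $\bm \nu\in \mathds C^n$ with $\mathrm{Re}(\nu_i)>d$, $1\le i\le n$, we have \[ \zeta_\Lambda^{(n)}(\bm \nu) = 2^d\sum_{\bm p\in \{\pm 1\}^{d - 1} }\sum_{j=0}^{d-1} \int_{0}^{1/2} \int_{[0,1/2]^{d-1}} u^{d-1} f(u \bm w )\,\mathrm d \bm v\,\mathrm d u, \] with $\bm w =A^{-T}\big(\sigma^j (2 p_1 v_1 ,\dots, 2 p_{d-1} v_{d-1} , 1)^T\big)$, the cyclic permutation $\sigma (x_1,\dots, x_d)^T = (x_d,x_1,\dots ,x_{d-1})^T$, and $f(\bm k) = \prod_{i=1}^n Z_{\Lambda,\nu_i}(\bm k)$.
   Context: $A\in\mathds R^{d\times d}$ is regular. The Epstein zeta function is $Z_{\Lambda,\nu}(\bm k)={\sum_{\bm z\in\Lambda}}' e^{-2\pi i\bm z\cdot\bm k}|\bm z|^{-\nu}$ for $\mathrm{Re}(\nu)>d$, where the primed sum excludes $\bm z=\bm 0$. The $n$-body zeta function is $\zeta_\Lambda^{(n)}(\bm \nu) = {\sum_{\bm x^{(1)},\dots, \bm x^{(n-1)} \in \Lambda}}' \prod_{j=1}^{n} |\bm x^{(j)}-\bm x^{(j-1)}|^{-\nu_j}$ with $\bm x^{(0)}=\bm x^{(n)}=\bm 0$ (primed sum excludes vanishing distances); for $\mathrm{Re}(\nu_i)>d$ it equals $|\det A|\int_{A^{-T}(-1/2,1/2)^d}\prod_{i=1}^n Z_{\Lambda,\nu_i}(\bm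 k)\,\mathrm d\bm k$. *)

theory Defs
  imports "HOL-Analysis.Analysis"
begin

(* Vectors in R^d are represented as functions nat => real, only the
   coordinates 0..d-1 being relevant (lattice points are 0 outside).
   A d x d real matrix is a function nat => nat => real (entries i,j < d). *)

definition mat_det :: "nat \<Rightarrow> (nat \<Rightarrow> nat \<Rightarrow> real) \<Rightarrow> real" where
  "mat_det d A = (\<Sum>p\<in>{p. p permutes {..<d}}. of_int (sign p) * (\<Prod>i<d. A i (p i)))"

definition mat_vec :: "nat \<Rightarrow> (nat \<Rightarrow> nat \<Rightarrow> real) \<Rightarrow> (nat \<Rightarrow> real) \<Rightarrow> (nat \<Rightarrow> real)" where
  "mat_vec d A x = (\<lambda>i. if i < d then (\<Sum>j<d. A i j * x j) else 0)"

definition lattice :: "nat \<Rightarrow> (nat \<Rightarrow> nat \<Rightarrow> real) \<Rightarrow> (nat \<Rightarrow> real) set" where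
  "lattice d A = {mat_vec d A (\<lambda>j. of_int (z j)) | z :: nat \<Rightarrow> int. True}"

definition vdot :: "nat \<Rightarrow> (nat \<Rightarrow> real) \<Rightarrow> (nat \<Rightarrow> real) \<Rightarrow> real" where
  "vdot d x y = (\<Sum>i<d. x i * y i)"

definition vnorm :: "nat \<Rightarrow> (nat \<Rightarrow> real) \<Rightarrow> real" where
  "vnorm d x = sqrt (\<Sum>i<d. (x i)^2)"

definition inv_transpose_apply :: "nat \<Rightarrow> (nat \<Rightarrow> nat \<Rightarrow> real) \<Rightarrow> (nat \<Rightarrow> real) \<Rightarrow> (nat \<Rightarrow> real)" where
  "inv_transpose_apply d A y =
     (THE w. (\<forall>i\<ge>d. w i = 0) \<and> (\<forall>i<d. (\<Sum>j<d. A j i * w j) = y i))"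

definition epstein_zeta :: "nat \<Rightarrow> (nat \<Rightarrow> nat \<Rightarrow> real) \<Rightarrow> complex \<Rightarrow> (nat \<Rightarrow> real) \<Rightarrow> complex" where
  "epstein_zeta d A \<nu> k =
     (\<Sum>\<^sub>\<infinity>z\<in>lattice d A - {(\<lambda>_. 0)}.
        exp (- 2 * of_real pi * \<i> * of_real (vdot d z k)) * (of_real (vnorm d z)) powr (- \<nu>))"

definition nbody_point :: "nat \<Rightarrow> (nat \<Rightarrow> nat \<Rightarrow> real) \<Rightarrow> nat \<Rightarrow> (nat \<Rightarrow> real)" where
  "nbody_point n x j = (if 1 \<le> j \<and> j < n then x j else (\<lambda>_. 0))"

definition nbody_zeta :: "nat \<Rightarrow> (nat \<Rightarrow> nat \<Rightarrow> real) \<Rightarrow> nat \<Rightarrow> (nat \<Rightarrow> complex) \<Rightarrow> complex" where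
  "nbody_zeta d A n \<nu> =
     (\<Sum>\<^sub>\<infinity>x\<in>{x \<in> PiE {1..<n} (\<lambda>_. lattice d A).
            \<forall>j\<in>{1..n}. nbody_point n x j \<noteq> nbody_point n x (j - 1)}.
        (\<Prod>j=1..n. (of_real (vnorm d (\<lambda>i. nbody_point n x j i - nbody_point n x (j - 1) i))) powr (- \<nu> j)))"

text \<open>Cyclic permutation sigma(x_1,...,x_d) = (x_d,x_1,...,x_{d-1}) (0-indexed here).\<close>
definition cyc_perm :: "nat \<Rightarrow> (nat \<Rightarrow> real) \<Rightarrow> (nat \<Rightarrow> real)" where
  "cyc_perm d x = (\<lambda>i. if i = 0 then x (d - 1) else if i < d then x (i - 1) else 0)"

definition pyr_vec :: "nat \<Rightarrow> (nat \<Rightarrow> real) \<Rightarrow> (nat \<Rightarrow> real) \<Rightarrow> (nat \<Rightarrow> real)" where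
  "pyr_vec d p v = (\<lambda>i. if i < d - 1 then 2 * p i * v i else if i = d - 1 then 1 else 0)"

end

theory Submission
  imports Defs "Jordan_Normal_Form.Gauss_Jordan_Elimination" "Jordan_Normal_Form.Determinant"
begin

text \<open>
  Expanding every Epstein zeta function into its lattice series turns the integrand into an
  absolutely convergent series over tuples \<open>t = (z\<^sub>1, \<dots>, z\<^sub>n)\<close> of nonzero lattice vectors:
  the weight \<open>|z\<^sub>1|\<^sup>-\<^sup>\<nu>\<^sup>1 \<cdots> |z\<^sub>n|\<^sup>-\<^sup>\<nu>\<^sup>n\<close> times the plane wave
  \<open>exp (-2\<pi>i (z\<^sub>1 + \<dots> + z\<^sub>n) \<cdot> k)\<close>. The plane waves are uniformly bounded on the compact
  domain of integration, so integrals, finite sums and the series may be interchanged.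

  In the coordinates \<open>M = A\<^sup>-\<^sup>1 (z\<^sub>1 + \<dots> + z\<^sub>n) \<in> \<int>\<^sup>d\<close>, the signs \<open>p\<close> and the powers \<open>\<sigma>\<^sup>j\<close>
  parametrise the pyramids with apex 0 over the faces \<open>x\<^sub>j = 1/2\<close> of the cube
  \<open>[-1/2, 1/2]\<^sup>d\<close>, i.e. half of the cube; the other half belongs to \<open>-M\<close>. Accordingly the
  right-hand side evaluated on the plane waves of \<open>M\<close> and of \<open>-M\<close> adds up to 2 if \<open>M = 0\<close>
  and to 0 otherwise. This is computed without any change of variables: the \<open>v\<close>-integrals
  factorise into the functions \<open>S(a, u) = sin (2\<pi>au) / (\<pi>a)\<close>, and after summing over the
  signs the sum over \<open>j\<close> is the derivative in \<open>u\<close> of \<open>\<Prod>\<^sub>i S(M\<^sub>i, u)\<close>, which vanishes at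
  \<open>u = 0\<close> and equals \<open>[M = 0]\<close> at \<open>u = 1/2\<close>.

  Since \<open>t \<mapsto> -t\<close> preserves the weights, exactly the tuples with \<open>z\<^sub>1 + \<dots> + z\<^sub>n = 0\<close>
  survive, and by taking consecutive differences these are in bijection with the
  configurations \<open>x\<^sup>(\<^sup>1\<^sup>), \<dots>, x\<^sup>(\<^sup>n\<^sup>-\<^sup>1\<^sup>)\<close> of the \<open>n\<close>-body zeta function.
\<close>

section \<open>Series and integrals\<close>

lemma summable_on_one_plus_abs_powr:
  assumes "r > 1"
  shows "(\<lambda>k::int. (1 + real_of_int \<bar>k\<bar>) powr (-r)) summable_on UNIV"
proof -
  have "summable (\<lambda>n. real n powr (-r))" using assms by (subst summable_real_powr_iff) simp
  then have "summable (\<lambda>n. (1 + real n) powr (-r))" by (subst (asm) summable_Suc_iff[symmetric]) simp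
  then have nat: "(\<lambda>n. (1 + real n) powr (-r)) summable_on UNIV"
    by (rule summable_nonneg_imp_summable_on) simp
  let ?f = "\<lambda>k::int. (1 + real_of_int \<bar>k\<bar>) powr (-r)"
  have "?f summable_on range int"
    by (subst summable_on_reindex) (use nat in \<open>auto simp: o_def inj_on_def\<close>)
  moreover have "?f summable_on range (\<lambda>n. - int n)"
    by (subst summable_on_reindex) (use nat in \<open>auto simp: o_def inj_on_def\<close>)
  moreover have "(UNIV :: int set) = range int \<union> range (\<lambda>n. - int n)"
  proof -
    have "k \<in> range int \<union> range (\<lambda>n. - int n)" for k :: int
      by (cases k rule: int_cases2) auto
    then show ?thesis by blast
  qed
  ultimately show ?thesis using summable_on_union by metis
qed

lemma summable_on_norm_prod_PiE:
  fixes f :: "'a \<Rightarrow> 'b \<Rightarrow> 'c :: {real_normed_field, banach, second_countable_topology}"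
  assumes "finite I" "\<And>i. i \<in> I \<Longrightarrow> countable (S i)"
    and "\<And>i. i \<in> I \<Longrightarrow> (\<lambda>x. norm (f i x)) summable_on S i"
  shows "(\<lambda>g. norm (\<Prod>i\<in>I. f i (g i))) summable_on PiE I S"
proof -
  have "Infinite_Set_Sum.abs_summable_on (f i) (S i)" if "i \<in> I" for i
    using abs_summable_equivalent[of "f i" "S i"] assms(3)[OF that] by simp
  then have "Infinite_Set_Sum.abs_summable_on (\<lambda>g. \<Prod>i\<in>I. f i (g i)) (PiE I S)"
    by (intro abs_summable_on_prod_PiE assms)
  then have "Infinite_Sum.abs_summable_on (\<lambda>g. \<Prod>i\<in>I. f i (g i)) (PiE I S)"
    using abs_summable_equivalent[of "\<lambda>g. \<Prod>i\<in>I. f i (g i)" "PiE I S"] by blast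
  then show ?thesis by simp
qed

lemma summable_on_sum:
  fixes f :: "'i \<Rightarrow> 't \<Rightarrow> 'b :: topological_comm_monoid_add"
  assumes "finite I" "\<And>i. i \<in> I \<Longrightarrow> f i summable_on T"
  shows "(\<lambda>t. \<Sum>i\<in>I. f i t) summable_on T"
  using assms
proof (induction I rule: finite_induct)
  case (insert x F)
  then show ?case by (simp add: summable_on_add)
qed simp

lemma infsum_sum:
  fixes f :: "'i \<Rightarrow> 't \<Rightarrow> 'b :: {topological_comm_monoid_add, t2_space}"
  assumes "finite I" "\<And>i. i \<in> I \<Longrightarrow> f i summable_on T"
  shows "(\<Sum>\<^sub>\<infinity>t\<in>T. \<Sum>i\<in>I. f i t) = (\<Sum>i\<in>I. \<Sum>\<^sub>\<infinity>t\<in>T. f i t)"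
  using assms
proof (induction I rule: finite_induct)
  case (insert x F)
  then show ?case by (simp add: infsum_add summable_on_sum)
qed simp

lemma summable_on_mult_bounded:
  fixes a X :: "'t \<Rightarrow> 'b :: {real_normed_div_algebra, banach}"
  assumes "(\<lambda>t. norm (a t)) summable_on T" and "\<And>t. t \<in> T \<Longrightarrow> norm (X t) \<le> C"
  shows "(\<lambda>t. a t * X t) summable_on T"
proof -
  have "(\<lambda>t. norm (a t) * C) summable_on T" using assms(1) by (rule summable_on_cmult_left)
  then have "(\<lambda>t. norm (a t * X t)) summable_on T"
    by (rule Infinite_Sum.abs_summable_on_comparison_test')
       (use assms(2) in \<open>auto simp: norm_mult intro!: mult_left_mono\<close>)
  then show ?thesis by (rule abs_summable_summable)
qed

lemma infsum_eq_suminf_bij: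
  fixes \<phi> :: "'t \<Rightarrow> 'b :: banach"
  assumes e: "bij_betw e UNIV T" and s: "summable (\<lambda>n. norm (\<phi> (e n)))"
  shows "(\<Sum>\<^sub>\<infinity>t\<in>T. \<phi> t) = (\<Sum>n. \<phi> (e n))"
proof -
  have "(\<lambda>n. \<phi> (e n)) sums (\<Sum>n. \<phi> (e n))"
    using summable_norm_cancel[OF s] by (rule summable_sums)
  then have "((\<lambda>n. \<phi> (e n)) has_sum (\<Sum>n. \<phi> (e n))) UNIV"
    by (rule norm_summable_imp_has_sum[OF s])
  then show ?thesis using infsum_reindex_bij_betw[OF e, of \<phi>] by (simp add: infsumI)
qed

lemma integral_infsum_enumerated:
  fixes a :: "'t \<Rightarrow> 'b :: {real_normed_field, banach, second_countable_topology}"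
    and g :: "'t \<Rightarrow> 'a \<Rightarrow> 'b" and e :: "nat \<Rightarrow> 't"
  assumes e: "bij_betw e UNIV T"
    and a: "(\<lambda>t. norm (a t)) summable_on T"
    and gi: "\<And>t. t \<in> T \<Longrightarrow> integrable M (g t)"
    and gb: "\<And>t x. t \<in> T \<Longrightarrow> x \<in> space M \<Longrightarrow> norm (g t x) \<le> D"
    and gn: "\<And>t. t \<in> T \<Longrightarrow> (\<integral>x. norm (g t x) \<partial>M) \<le> C"
    and F: "\<And>x. x \<in> space M \<Longrightarrow> F x = (\<Sum>\<^sub>\<infinity>t\<in>T. a t * g t x)"
  shows "integral\<^sup>L M F = (\<Sum>\<^sub>\<infinity>t\<in>T. a t * integral\<^sup>L M (g t))"
proof -
  have eT: "e n \<in> T" for n using e bij_betwE by blast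
  have "(\<lambda>n. norm (a (e n))) summable_on UNIV" using a summable_on_reindex_bij_betw[OF e, of "\<lambda>t. norm (a t)"] by simp
  then have na: "summable (\<lambda>n. norm (a (e n)))" by (rule summable_on_imp_summable)
  define f where "f n x = a (e n) * g (e n) x" for n x
  have fi: "integrable M (f n)" for n unfolding f_def using gi[OF eT] by (rule integrable_mult_right)
  have ptw: "summable (\<lambda>n. norm (f n x))" if x: "x \<in> space M" for x
  proof (rule summable_comparison_test'[of "\<lambda>n. norm (a (e n)) * D" 0])
    show "summable (\<lambda>n. norm (a (e n)) * D)" using na by (rule summable_mult2)
    show "norm (norm (f n x)) \<le> norm (a (e n)) * D" for n
      unfolding f_def using gb[OF eT x] by (simp add: norm_mult mult_left_mono)
  qed
  have ns: "summable (\<lambda>n. \<integral>x. norm (f n x) \<partial>M)"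
  proof (rule summable_comparison_test'[of "\<lambda>n. norm (a (e n)) * C" 0])
    show "summable (\<lambda>n. norm (a (e n)) * C)" using na by (rule summable_mult2)
    show "norm (\<integral>x. norm (f n x) \<partial>M) \<le> norm (a (e n)) * C" for n
      unfolding f_def using gn[OF eT] by (simp add: norm_mult mult_left_mono)
  qed
  have "integral\<^sup>L M F = (\<integral>x. (\<Sum>n. f n x) \<partial>M)"
  proof (rule Bochner_Integration.integral_cong[OF refl])
    fix x assume x: "x \<in> space M"
    show "F x = (\<Sum>n. f n x)"
      unfolding F[OF x] f_def by (rule infsum_eq_suminf_bij[OF e]) (use ptw[OF x] in \<open>simp add: f_def\<close>)
  qed
  also have "\<dots> = (\<Sum>n. integral\<^sup>L M (f n))"
    by (rule integral_suminf[OF fi AE_I2[OF ptw] ns])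
  also have "\<dots> = (\<Sum>\<^sub>\<infinity>t\<in>T. a t * integral\<^sup>L M (g t))"
    unfolding f_def integral_mult_right_zero
  proof (rule infsum_eq_suminf_bij[OF e, symmetric])
    show "summable (\<lambda>n. norm (a (e n) * integral\<^sup>L M (g (e n))))"
    proof (rule summable_comparison_test'[of "\<lambda>n. norm (a (e n)) * C" 0])
      show "summable (\<lambda>n. norm (a (e n)) * C)" using na by (rule summable_mult2)
      show "norm (norm (a (e n) * integral\<^sup>L M (g (e n)))) \<le> norm (a (e n)) * C" for n
        using order_trans[OF integral_norm_bound gn[OF eT]] by (simp add: norm_mult mult_left_mono)
    qed
  qed
  finally show ?thesis .
qed

lemma integral_infsum:
  fixes a :: "'t \<Rightarrow> 'b :: {real_normed_field, banach, second_countable_topology}"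
    and g :: "'t \<Rightarrow> 'a \<Rightarrow> 'b"
  assumes T: "countable T"
    and a: "(\<lambda>t. norm (a t)) summable_on T"
    and gi: "\<And>t. t \<in> T \<Longrightarrow> integrable M (g t)"
    and gb: "\<And>t x. t \<in> T \<Longrightarrow> x \<in> space M \<Longrightarrow> norm (g t x) \<le> D"
    and gn: "\<And>t. t \<in> T \<Longrightarrow> (\<integral>x. norm (g t x) \<partial>M) \<le> C"
    and F: "\<And>x. x \<in> space M \<Longrightarrow> F x = (\<Sum>\<^sub>\<infinity>t\<in>T. a t * g t x)"
  shows "integral\<^sup>L M F = (\<Sum>\<^sub>\<infinity>t\<in>T. a t * integral\<^sup>L M (g t))"
proof (cases "finite T")
  case True
  then have "integral\<^sup>L M F = integral\<^sup>L M (\<lambda>x. \<Sum>t\<in>T. a t * g t x)"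
    using F by (intro Bochner_Integration.integral_cong refl) simp
  also have "\<dots> = (\<Sum>t\<in>T. a t * integral\<^sup>L M (g t))"
    using gi by (subst Bochner_Integration.integral_sum) auto
  finally show ?thesis using True by simp
next
  case False
  with T have "bij_betw (from_nat_into T) UNIV T" by (rule bij_betw_from_nat_into)
  from this a gi gb gn F show ?thesis by (rule integral_infsum_enumerated)
qed

lemma set_integral_infsum:
  fixes a :: "'t \<Rightarrow> 'b :: {real_normed_field, banach, second_countable_topology}"
    and g :: "'t \<Rightarrow> 'a \<Rightarrow> 'b"
  assumes T: "countable T" and a: "(\<lambda>t. norm (a t)) summable_on T"
    and S: "S \<in> sets M" "emeasure M S < \<infinity>"
    and gm: "\<And>t. t \<in> T \<Longrightarrow> g t \<in> borel_measurable M"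
    and gb: "\<And>t x. t \<in> T \<Longrightarrow> x \<in> S \<Longrightarrow> norm (g t x) \<le> D" and "0 \<le> D"
    and F: "\<And>x. x \<in> S \<Longrightarrow> F x = (\<Sum>\<^sub>\<infinity>t\<in>T. a t * g t x)"
  shows "(LINT x:S|M. F x) = (\<Sum>\<^sub>\<infinity>t\<in>T. a t * (LINT x:S|M. g t x))"
  unfolding set_lebesgue_integral_def
proof (rule integral_infsum[OF T a])
  fix t assume t: "t \<in> T"
  have bound: "norm (indicator S x *\<^sub>R g t x) \<le> D * indicator S x" for x
    using gb[OF t, of x] \<open>0 \<le> D\<close> by (auto split: split_indicator)
  show integrable: "integrable M (\<lambda>x. indicator S x *\<^sub>R g t x)"
    by (rule integrableI_bounded_set_indicator[where B=D]) (use S gm[OF t] gb[OF t] in auto)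
  show "norm (indicator S x *\<^sub>R g t x) \<le> D" for x
    using bound[of x] \<open>0 \<le> D\<close> by (auto split: split_indicator)
  show "(\<integral>x. norm (indicator S x *\<^sub>R g t x) \<partial>M) \<le> integral\<^sup>L M (\<lambda>x. D * indicator S x)"
    using S by (intro integral_mono integrable_norm integrable bound integrable_mult_right) auto
next
  fix x assume "x \<in> space M"
  show "indicator S x *\<^sub>R F x = (\<Sum>\<^sub>\<infinity>t\<in>T. a t * (indicator S x *\<^sub>R g t x))"
    by (cases "x \<in> S") (auto simp: F)
qed

lemma product_sigma_finite_lborel: "product_sigma_finite (\<lambda>_. lborel :: real measure)"
  by (simp add: product_sigma_finite_def lborel.sigma_finite_measure_axioms)

lemma emeasure_PiE_Icc_finite:
  "emeasure (PiM I (\<lambda>_. lborel)) (PiE I (\<lambda>_. {a..b::real})) < \<infinity>" if "finite I"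
proof -
  have "emeasure (PiM I (\<lambda>_. lborel)) (PiE I (\<lambda>_. {a..b::real})) = (\<Prod>i\<in>I. emeasure lborel {a..b})"
    using that by (intro product_sigma_finite.emeasure_PiM[OF product_sigma_finite_lborel]) auto
  then show ?thesis using emeasure_compact_finite[OF compact_Icc, of a b]
    by (simp add: power_less_top_ennreal)
qed

lemma set_integral_PiE_prod:
  fixes f :: "'i \<Rightarrow> real \<Rightarrow> 'b :: {real_normed_field, banach, second_countable_topology}"
  assumes I: "finite I" and fi: "\<And>i. i \<in> I \<Longrightarrow> set_integrable lborel (S i) (f i)"
  shows "(LINT v:PiE I S|PiM I (\<lambda>_. lborel). \<Prod>i\<in>I. f i (v i)) = (\<Prod>i\<in>I. LINT x:S i|lborel. f i x)"
proof -
  interpret product_sigma_finite "\<lambda>_. lborel :: real measure" by (rule product_sigma_finite_lborel)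
  have "integral\<^sup>L (PiM I (\<lambda>_. lborel)) (\<lambda>v. indicator (PiE I S) v *\<^sub>R (\<Prod>i\<in>I. f i (v i))) =
        integral\<^sup>L (PiM I (\<lambda>_. lborel)) (\<lambda>v. \<Prod>i\<in>I. indicator (S i) (v i) *\<^sub>R f i (v i))"
  proof (intro Bochner_Integration.integral_cong refl)
    fix v assume "v \<in> space (PiM I (\<lambda>_. lborel :: real measure))"
    then have ext: "v \<in> extensional I" by (simp add: space_PiM PiE_iff)
    show "indicator (PiE I S) v *\<^sub>R (\<Prod>i\<in>I. f i (v i)) = (\<Prod>i\<in>I. indicator (S i) (v i) *\<^sub>R f i (v i))"
    proof (cases "\<forall>i\<in>I. v i \<in> S i")
      case True
      then show ?thesis using ext by (simp add: PiE_iff indicator_def)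
    next
      case False
      then obtain i where i: "i \<in> I" "v i \<notin> S i" by blast
      then have "(\<Prod>i\<in>I. indicator (S i) (v i) *\<^sub>R f i (v i)) = 0"
        using I by (intro prod_zero bexI[of _ i]) auto
      moreover have "v \<notin> PiE I S" using i by (auto simp: PiE_iff)
      ultimately show ?thesis by simp
    qed
  qed
  also have "\<dots> = (\<Prod>i\<in>I. integral\<^sup>L lborel (\<lambda>x. indicator (S i) x *\<^sub>R f i x))"
    using fi I by (intro product_integral_prod) (auto simp: set_integrable_def)
  finally show ?thesis unfolding set_lebesgue_integral_def .
qed

lemma set_integral_sum:
  fixes f :: "'i \<Rightarrow> 'a \<Rightarrow> 'b :: {banach, second_countable_topology}"
  assumes "\<And>i. i \<in> I \<Longrightarrow> set_integrable M S (f i)"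
  shows "(LINT x:S|M. \<Sum>i\<in>I. f i x) = (\<Sum>i\<in>I. LINT x:S|M. f i x)"
  unfolding set_lebesgue_integral_def scaleR_sum_right
  using assms by (intro Bochner_Integration.integral_sum) (auto simp: set_integrable_def)

lemma norm_set_integral_le_measure:
  fixes f :: "'a \<Rightarrow> 'b :: {banach, second_countable_topology}"
  assumes S: "S \<in> sets M" "emeasure M S < \<infinity>" and fi: "set_integrable M S f"
    and b: "\<And>x. x \<in> S \<Longrightarrow> norm (f x) \<le> B"
  shows "norm (LINT x:S|M. f x) \<le> B * measure M S"
proof -
  have "norm (LINT x:S|M. f x) \<le> integral\<^sup>L M (\<lambda>x. norm (indicator S x *\<^sub>R f x))"
    unfolding set_lebesgue_integral_def by (rule integral_norm_bound)
  also have "\<dots> \<le> integral\<^sup>L M (\<lambda>x. B * indicator S x)"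
  proof (rule integral_mono)
    show "integrable M (\<lambda>x. norm (indicator S x *\<^sub>R f x))"
      using fi unfolding set_integrable_def by (rule integrable_norm)
    show "integrable M (\<lambda>x. B * indicator S x)" using S by (intro integrable_mult_right integrable_real_indicator)
    show "norm (indicator S x *\<^sub>R f x) \<le> B * indicator S x" for x
      using b[of x] by (auto split: split_indicator)
  qed
  also have "\<dots> = B * measure M S" using S by (simp add: Int_absorb2 sets.sets_into_space)
  finally show ?thesis .
qed

section \<open>One-dimensional plane waves\<close>

definition fourier_char :: "real \<Rightarrow> complex" where
  "fourier_char \<theta> = exp (- 2 * of_real pi * \<i> * of_real \<theta>)"

lemma fourier_char_add: "fourier_char (x + y) = fourier_char x * fourier_char y"
proof -
  have "- 2 * of_real pi * \<i> * of_real (x + y) =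
      (- 2 * of_real pi * \<i> * of_real x) + (- 2 * of_real pi * \<i> * of_real y)"
    by (simp add: algebra_simps)
  then show ?thesis by (simp only: fourier_char_def exp_add)
qed

lemma fourier_char_zero [simp]: "fourier_char 0 = 1"
  by (simp add: fourier_char_def)

lemma fourier_char_sum: "fourier_char (\<Sum>i\<in>I. f i) = (\<Prod>i\<in>I. fourier_char (f i))"
  by (induction I rule: infinite_finite_induct) (auto simp: fourier_char_add)

lemma norm_fourier_char [simp]: "norm (fourier_char x) = 1"
proof -
  have "fourier_char x = exp (\<i> * of_real (- 2 * pi * x))"
    unfolding fourier_char_def by (simp add: algebra_simps)
  then show ?thesis by simp
qed

lemma fourier_char_add_uminus: "fourier_char x + fourier_char (- x) = of_real (2 * cos (2 * pi * x))"
proof -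
  have "fourier_char x + fourier_char (- x) = 2 * cos (complex_of_real (2 * pi * x))"
    unfolding cos_exp_eq fourier_char_def by (simp add: algebra_simps)
  also have "\<dots> = of_real (2 * cos (2 * pi * x))" by (simp only: cos_of_real) simp
  finally show ?thesis .
qed

lemma continuous_on_fourier_char: "continuous_on S fourier_char"
  unfolding fourier_char_def by (intro continuous_intros)

lemma borel_measurable_fourier_char [measurable]: "fourier_char \<in> borel_measurable borel"
  using continuous_on_fourier_char by (rule borel_measurable_continuous_onI)

lemma set_integrable_fourier_char: "set_integrable lborel {a..b} (\<lambda>x. fourier_char (c * x))"
  by (rule borel_integrable_atLeastAtMost')
     (intro continuous_on_compose2[OF continuous_on_fourier_char] continuous_intros, auto)

lemma norm_set_integral_fourier_char_le: "norm (LINT x:{0..1/2}|lborel. fourier_char (c * x)) \<le> 1"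
proof -
  have "norm (LINT x:{0..1/2}|lborel. fourier_char (c * x)) \<le> 1 * measure lborel {0..1/2::real}"
    by (rule norm_set_integral_le_measure[OF _ emeasure_compact_finite[OF compact_Icc]])
       (auto simp: set_integrable_fourier_char)
  then show ?thesis by simp
qed

text \<open>\<open>box_fourier a u\<close> is the integral of \<open>fourier_char (a * x)\<close> over \<open>[-u, u]\<close>.\<close>
definition box_fourier :: "real \<Rightarrow> real \<Rightarrow> real" where
  "box_fourier a u = (if a = 0 then 2 * u else sin (2 * pi * a * u) / (pi * a))"

lemma box_fourier_uminus: "box_fourier (- a) u = box_fourier a u"
  by (simp add: box_fourier_def)

lemma box_fourier_at_0: "box_fourier a 0 = 0"
  by (simp add: box_fourier_def)

lemma box_fourier_half_Ints: "a \<in> \<int> \<Longrightarrow> box_fourier a (1/2) = of_bool (a = 0)"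
proof -
  assume "a \<in> \<int>"
  then have "sin (a * pi) = 0" by (simp add: sin_times_pi_eq_0)
  then show ?thesis by (simp add: box_fourier_def mult_ac)
qed

lemma box_fourier_rescale: "2 * u * box_fourier (2 * u * a) (1/2) = box_fourier a u"
proof (cases "a = 0 \<or> u = 0")
  case False
  have "sin (pi * (2 * u * a)) = sin (2 * pi * a * u)" by (simp add: mult_ac)
  then show ?thesis using False by (simp add: box_fourier_def field_simps)
qed (auto simp: box_fourier_def)

lemma continuous_on_box_fourier: "continuous_on S (box_fourier a)"
  unfolding box_fourier_def by (cases "a = 0") (auto intro!: continuous_intros)

lemma has_real_derivative_box_fourier:
  "(box_fourier a has_real_derivative 2 * cos (2 * pi * (u * a))) (at u within S)"
proof (cases "a = 0")
  case False
  have "((\<lambda>u. sin (2 * pi * a * u) / (pi * a)) has_real_derivative 2 * cos (2 * pi * (u * a))) (at u within S)"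
    using False by (auto intro!: derivative_eq_intros simp: field_simps mult_ac)
  then show ?thesis unfolding box_fourier_def using False by simp
next
  case True
  then show ?thesis unfolding box_fourier_def by (auto intro!: derivative_eq_intros)
qed

lemma set_integral_fourier_char_symmetric:
  assumes "0 \<le> w"
  shows "(LINT x:{0..w}|lborel. fourier_char (c * x)) + (LINT x:{0..w}|lborel. fourier_char (- c * x)) =
    of_real (box_fourier c w)"
proof -
  have "(LINT x:{0..w}|lborel. fourier_char (c * x)) + (LINT x:{0..w}|lborel. fourier_char (- c * x)) =
        (LINT x:{0..w}|lborel. fourier_char (c * x) + fourier_char (- (c * x)))"
    using set_integrable_fourier_char[of 0 w "- c", simplified] set_integrable_fourier_char[of 0 w c]
    by (subst set_integral_add(2)) auto
  also have "\<dots> = of_real (LINT x:{0..w}|lborel. 2 * cos (2 * pi * (c * x)))"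
    by (simp only: fourier_char_add_uminus set_integral_complex_of_real)
  also have "(LINT x:{0..w}|lborel. 2 * cos (2 * pi * (c * x))) = box_fourier c w - box_fourier c 0"
    unfolding set_lebesgue_integral_def
  proof (rule integral_FTC_atLeastAtMost)
    show "(box_fourier c has_vector_derivative 2 * cos (2 * pi * (c * x))) (at x within {0..w})" for x
      using has_real_derivative_box_fourier[of c x]
      by (simp add: has_real_derivative_iff_has_vector_derivative mult.commute)
  qed (use assms in \<open>auto intro!: continuous_intros\<close>)
  finally show ?thesis by (simp add: box_fourier_at_0)
qed

section \<open>The lattice and its coordinates\<close>

lemma det_mat_eq_mat_det: "det (mat d d (\<lambda>(i, j). A i j)) = mat_det d A"
proof -
  have "det (mat d d (\<lambda>(i, j). A i j)) =
      (\<Sum>p\<in>{p. p permutes {0..<d}}. signof p * (\<Prod>i=0..<d. mat d d (\<lambda>(i, j). A i j) $$ (i, p i)))"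
    by (rule det_def') simp
  also have "\<dots> = mat_det d A"
    unfolding mat_det_def atLeast0LessThan
  proof (rule sum.cong)
    fix p assume "p \<in> {p. p permutes {..<d}}"
    then have "\<And>i. i < d \<Longrightarrow> p i < d" using permutes_in_image by fastforce
    then show "signof p * (\<Prod>i<d. mat d d (\<lambda>(i, j). A i j) $$ (i, p i)) = of_int (sign p) * (\<Prod>i<d. A i (p i))"
      by (auto intro!: prod.cong)
  qed simp
  finally show ?thesis .
qed

lemma mat_det_nonzero_obtains_inverse:
  assumes "mat_det d A \<noteq> 0"
  obtains B where "\<And>i j. i < d \<Longrightarrow> j < d \<Longrightarrow> (\<Sum>k<d. B i k * A k j) = of_bool (i = j)"
    and "\<And>i j. i < d \<Longrightarrow> j < d \<Longrightarrow> (\<Sum>k<d. A i k * B k j) = of_bool (i = j)"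
proof -
  let ?M = "mat d d (\<lambda>(i, j). A i j)"
  have car: "?M \<in> carrier_mat d d" by simp
  have "det ?M \<noteq> 0" using assms det_mat_eq_mat_det by metis
  from det_non_zero_imp_unit[OF car this] have "?M \<in> Units (ring_mat TYPE(real) d d)" .
  then obtain Bm where "mat_inverse ?M = Some Bm"
    using mat_inverse(1)[OF car, of d] by (cases "mat_inverse ?M") auto
  from mat_inverse(2)[OF car this] have right: "?M * Bm = 1\<^sub>m d" and left: "Bm * ?M = 1\<^sub>m d"
    and Bm: "Bm \<in> carrier_mat d d" by auto
  show ?thesis
  proof
    fix i j assume ij: "i < d" "j < d"
    have "(Bm * ?M) $$ (i, j) = (\<Sum>k<d. Bm $$ (i, k) * A k j)"
      using ij Bm by (simp add: scalar_prod_def atLeast0LessThan)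
    moreover have "(Bm * ?M) $$ (i, j) = of_bool (i = j)" using left ij by (simp add: of_bool_def)
    ultimately show "(\<Sum>k<d. Bm $$ (i, k) * A k j) = of_bool (i = j)" by simp
  next
    fix i j assume ij: "i < d" "j < d"
    have "(?M * Bm) $$ (i, j) = (\<Sum>k<d. A i k * Bm $$ (k, j))"
      using ij Bm by (simp add: scalar_prod_def atLeast0LessThan)
    moreover have "(?M * Bm) $$ (i, j) = of_bool (i = j)" using right ij by (simp add: of_bool_def)
    ultimately show "(\<Sum>k<d. A i k * Bm $$ (k, j)) = of_bool (i = j)" by simp
  qed
qed

(* Qualified because HOL-Algebra, imported through Jordan_Normal_Form, has a constant lattice. *)
lemma mem_lattice_iff: "z \<in> Defs.lattice d A \<longleftrightarrow> (\<exists>m :: nat \<Rightarrow> int. z = mat_vec d A (\<lambda>j. of_int (m j)))"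
  unfolding Defs.lattice_def by auto

lemma mat_vec_cong: "(\<And>j. j < d \<Longrightarrow> x j = y j) \<Longrightarrow> mat_vec d A x = mat_vec d A y"
  unfolding mat_vec_def by (auto intro!: sum.cong)

lemma zero_mem_lattice: "(\<lambda>_. 0) \<in> Defs.lattice d A"
  unfolding mem_lattice_iff by (rule exI[of _ "\<lambda>_. 0"]) (simp add: mat_vec_def fun_eq_iff)

lemma lattice_add:
  assumes "z \<in> Defs.lattice d A" "w \<in> Defs.lattice d A"
  shows "(\<lambda>i. z i + w i) \<in> Defs.lattice d A"
proof -
  obtain m m' where "z = mat_vec d A (\<lambda>j. of_int (m j))" "w = mat_vec d A (\<lambda>j. of_int (m' j))"
    using assms unfolding mem_lattice_iff by blast
  then have "(\<lambda>i. z i + w i) = mat_vec d A (\<lambda>j. of_int (m j + m' j))"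
    by (auto simp: mat_vec_def sum.distrib algebra_simps)
  then show ?thesis unfolding mem_lattice_iff by (rule exI[where x="\<lambda>j. m j + m' j"])
qed

lemma lattice_uminus:
  assumes "z \<in> Defs.lattice d A"
  shows "(\<lambda>i. - z i) \<in> Defs.lattice d A"
proof -
  obtain m where "z = mat_vec d A (\<lambda>j. of_int (m j))"
    using assms unfolding mem_lattice_iff by blast
  then have "(\<lambda>i. - z i) = mat_vec d A (\<lambda>j. of_int (- m j))"
    by (auto simp: mat_vec_def sum_negf)
  then show ?thesis unfolding mem_lattice_iff by (rule exI[where x="\<lambda>j. - m j"])
qed

lemma lattice_diff: "z \<in> Defs.lattice d A \<Longrightarrow> w \<in> Defs.lattice d A \<Longrightarrow> (\<lambda>i. z i - w i) \<in> Defs.lattice d A"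
  using lattice_add[OF _ lattice_uminus, of z d A w] by simp

lemma lattice_sum:
  "(\<And>j. j \<in> J \<Longrightarrow> t j \<in> Defs.lattice d A) \<Longrightarrow> (\<lambda>i. \<Sum>j\<in>J. t j i) \<in> Defs.lattice d A"
proof (induction J rule: infinite_finite_induct)
  case (insert x F)
  then show ?case using lattice_add[of "t x" d A "\<lambda>i. \<Sum>j\<in>F. t j i"] by simp
qed (simp_all add: zero_mem_lattice)

lemma lattice_subset_image_PiE:
  "Defs.lattice d A \<subseteq> (\<lambda>M. mat_vec d A (\<lambda>j. of_int (M j))) ` PiE {..<d} (\<lambda>_. UNIV)"
proof
  fix z assume "z \<in> Defs.lattice d A"
  then obtain m where z: "z = mat_vec d A (\<lambda>j. of_int (m j))" unfolding mem_lattice_iff by blast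
  show "z \<in> (\<lambda>M. mat_vec d A (\<lambda>j. of_int (M j))) ` PiE {..<d} (\<lambda>_. UNIV)"
    by (rule image_eqI[where x="restrict m {..<d}"]) (use z in \<open>auto intro: mat_vec_cong\<close>)
qed

lemma countable_lattice: "countable (Defs.lattice d A)"
proof (rule countable_subset[OF lattice_subset_image_PiE])
  show "countable ((\<lambda>M. mat_vec d A (\<lambda>j. of_int (M j))) ` PiE {..<d} (\<lambda>_. UNIV :: int set))"
    by (intro countable_image countable_PiE) simp_all
qed

lemma abs_le_vnorm: "i < d \<Longrightarrow> \<bar>z i\<bar> \<le> vnorm d z"
proof -
  assume "i < d"
  then have "(z i)\<^sup>2 \<le> (\<Sum>j<d. (z j)\<^sup>2)" by (intro member_le_sum) auto
  then show ?thesis unfolding vnorm_def by (metis real_sqrt_abs real_sqrt_le_mono)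
qed

lemma vnorm_uminus: "vnorm d (\<lambda>l. - z l) = vnorm d z"
  by (simp add: vnorm_def)

locale lattice_basis =
  fixes d :: nat and A B :: "nat \<Rightarrow> nat \<Rightarrow> real"
  assumes B_A_eq: "\<And>i j. i < d \<Longrightarrow> j < d \<Longrightarrow> (\<Sum>k<d. B i k * A k j) = of_bool (i = j)"
    and A_B_eq: "\<And>i j. i < d \<Longrightarrow> j < d \<Longrightarrow> (\<Sum>k<d. A i k * B k j) = of_bool (i = j)"
begin

definition coords :: "(nat \<Rightarrow> real) \<Rightarrow> nat \<Rightarrow> real" where
  "coords z k = (\<Sum>i<d. B k i * z i)"

lemma inv_transpose_apply_eq: "inv_transpose_apply d A y = (\<lambda>i. if i < d then \<Sum>j<d. B j i * y j else 0)"
proof -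
  let ?w = "\<lambda>i. if i < d then \<Sum>j<d. B j i * y j else 0"
  let ?P = "\<lambda>w. (\<forall>i\<ge>d. w i = 0) \<and> (\<forall>i<d. (\<Sum>j<d. A j i * w j) = y i)"
  have "?P ?w"
  proof (intro conjI allI impI)
    fix i assume "i < d"
    have "(\<Sum>j<d. A j i * ?w j) = (\<Sum>k<d. (\<Sum>j<d. B k j * A j i) * y k)"
      by (simp add: sum_distrib_left sum_distrib_right mult_ac) (rule sum.swap)
    also have "\<dots> = y i" using \<open>i < d\<close> by (simp add: B_A_eq)
    finally show "(\<Sum>j<d. A j i * ?w j) = y i" .
  qed simp
  moreover have "w = ?w" if "?P w" for w
  proof
    fix i show "w i = ?w i"
    proof (cases "i < d")
      case True
      have "?w i = (\<Sum>j<d. B j i * (\<Sum>m<d. A m j * w m))" using True that by simp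
      also have "\<dots> = (\<Sum>m<d. (\<Sum>j<d. A m j * B j i) * w m)"
        by (simp add: sum_distrib_left sum_distrib_right mult_ac) (rule sum.swap)
      also have "\<dots> = w i" using True by (simp add: A_B_eq)
      finally show ?thesis by simp
    qed (use that in simp)
  qed
  ultimately show ?thesis unfolding inv_transpose_apply_def by (intro the_equality) blast+
qed

lemma vdot_inv_transpose_apply:
  "vdot d z (\<lambda>l. u * inv_transpose_apply d A y l) = u * vdot d (coords z) y"
  unfolding vdot_def coords_def inv_transpose_apply_eq
  by (simp add: sum_distrib_left sum_distrib_right mult_ac) (rule sum.swap)

lemma coords_mat_vec: "k < d \<Longrightarrow> coords (mat_vec d A x) k = x k"
proof -
  assume k: "k < d"
  have "coords (mat_vec d A x) k = (\<Sum>j<d. (\<Sum>i<d. B k i * A i j) * x j)"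
    unfolding coords_def mat_vec_def
    by (simp add: sum_distrib_left sum_distrib_right mult_ac) (rule sum.swap)
  also have "\<dots> = x k" using k by (simp add: B_A_eq)
  finally show ?thesis .
qed

lemma coords_lattice_Ints: "z \<in> Defs.lattice d A \<Longrightarrow> k < d \<Longrightarrow> coords z k \<in> \<int>"
  unfolding mem_lattice_iff by (auto simp: coords_mat_vec)

lemma lattice_eq_zero_iff_coords:
  assumes "z \<in> Defs.lattice d A"
  shows "z = (\<lambda>_. 0) \<longleftrightarrow> (\<forall>k<d. coords z k = 0)"
proof
  assume "\<forall>k<d. coords z k = 0"
  moreover obtain m :: "nat \<Rightarrow> int" where z: "z = mat_vec d A (\<lambda>j. of_int (m j))"
    using assms unfolding mem_lattice_iff by blast
  ultimately have "z = mat_vec d A (\<lambda>_. 0)" by (auto simp: coords_mat_vec intro: mat_vec_cong)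
  then show "z = (\<lambda>_. 0)" by (simp add: mat_vec_def fun_eq_iff)
qed (simp add: coords_def)

lemma coords_uminus: "coords (\<lambda>i. - z i) = (\<lambda>k. - coords z k)"
  unfolding coords_def by (simp add: sum_negf)

lemma obtain_coords_bound:
  obtains K where "0 < K" and "\<And>z j. j < d \<Longrightarrow> \<bar>coords z j\<bar> \<le> K * vnorm d z"
proof
  let ?K = "1 + (\<Sum>j<d. \<Sum>i<d. \<bar>B j i\<bar>)"
  show "0 < ?K" by (simp add: add_pos_nonneg sum_nonneg)
  fix z j assume j: "j < d"
  have "\<bar>coords z j\<bar> \<le> (\<Sum>i<d. \<bar>B j i\<bar> * \<bar>z i\<bar>)"
    unfolding coords_def by (rule order_trans[OF sum_abs]) (simp add: abs_mult)
  also have "\<dots> \<le> (\<Sum>i<d. \<bar>B j i\<bar>) * vnorm d z"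
    unfolding sum_distrib_right by (intro sum_mono mult_left_mono abs_le_vnorm) auto
  also have "\<dots> \<le> ?K * vnorm d z"
  proof (rule mult_right_mono)
    have "(\<Sum>i<d. \<bar>B j i\<bar>) \<le> (\<Sum>j<d. \<Sum>i<d. \<bar>B j i\<bar>)"
      using j by (intro member_le_sum[of j "{..<d}" "\<lambda>j. \<Sum>i<d. \<bar>B j i\<bar>"]) (auto intro: sum_nonneg)
    then show "(\<Sum>i<d. \<bar>B j i\<bar>) \<le> ?K" by simp
  qed (simp add: vnorm_def sum_nonneg)
  finally show "\<bar>coords z j\<bar> \<le> ?K * vnorm d z" .
qed

end

section \<open>Absolute convergence of the Epstein series\<close>

context lattice_basis
begin

text \<open>
  Since \<open>|M\<^sub>j| \<le> K |A M|\<close> for all \<open>j\<close> and \<open>1 \<le> K |A M|\<close>, every factor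
  \<open>(1 + |M\<^sub>j|) / (2K)\<close> is at most \<open>|A M|\<close>; so \<open>|A M|\<^sup>-\<^sup>s = \<Prod>\<^sub>j |A M|\<^sup>-\<^sup>s\<^sup>/\<^sup>d\<close> is dominated
  by a product of one-dimensional series, which converge for \<open>s / d > 1\<close>.
\<close>
lemma vnorm_mat_vec_powr_le:
  assumes "0 < d" "0 < K" and K: "\<And>z j. j < d \<Longrightarrow> \<bar>coords z j\<bar> \<le> K * vnorm d z"
    and M: "i < d" "M i \<noteq> 0" and "0 \<le> s"
  shows "vnorm d (mat_vec d A (\<lambda>j. of_int (M j))) powr (-s) \<le>
    ((2 * K) powr (s / d)) ^ d * (\<Prod>j<d. (1 + real_of_int \<bar>M j\<bar>) powr (- (s / d)))"
proof -
  let ?v = "vnorm d (mat_vec d A (\<lambda>j. of_int (M j)))"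
  let ?r = "s / d"
  have coord: "\<bar>real_of_int (M j)\<bar> \<le> K * ?v" if "j < d" for j
    using K[OF that, of "mat_vec d A (\<lambda>j. of_int (M j))"] that by (simp add: coords_mat_vec)
  have v1: "1 \<le> K * ?v" using coord[OF M(1)] M(2) by linarith
  have "0 < K * ?v" using v1 by linarith
  then have vpos: "0 < ?v" using \<open>0 < K\<close> by (simp add: zero_less_mult_iff)
  have each: "(1 + real_of_int \<bar>M j\<bar>) / (2 * K) \<le> ?v" if "j < d" for j
    using coord[OF that] v1 \<open>0 < K\<close> by (simp add: field_simps)
  have "?v powr (-s) = ?v powr (\<Sum>j<d. - ?r)" using \<open>0 < d\<close> by simp
  also have "\<dots> = (\<Prod>j<d. ?v powr (- ?r))" using vpos by (intro powr_sum) simp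
  also have "\<dots> \<le> (\<Prod>j<d. ((1 + real_of_int \<bar>M j\<bar>) / (2 * K)) powr (- ?r))"
    using \<open>0 < K\<close> \<open>s \<ge> 0\<close> by (intro prod_mono conjI powr_mono2' each) (auto simp: add_pos_nonneg)
  also have "\<dots> = (\<Prod>j<d. (2 * K) powr ?r * (1 + real_of_int \<bar>M j\<bar>) powr (- ?r))"
    using \<open>0 < K\<close> by (intro prod.cong refl) (simp add: powr_divide powr_minus divide_simps add_pos_nonneg)
  finally show ?thesis by (simp add: prod.distrib)
qed

lemma nonzero_lattice_eq_image:
  "Defs.lattice d A - {\<lambda>_. 0} =
    (\<lambda>M. mat_vec d A (\<lambda>j. of_int (M j))) ` (PiE {..<d} (\<lambda>_. UNIV) - {M. \<forall>j<d. M j = 0})"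
  (is "_ = ?h ` ?P")
proof (intro equalityI subsetI)
  fix z assume z: "z \<in> Defs.lattice d A - {\<lambda>_. 0}"
  then have "z \<in> ?h ` PiE {..<d} (\<lambda>_. UNIV)" using lattice_subset_image_PiE by blast
  then obtain M where M: "M \<in> PiE {..<d} (\<lambda>_. UNIV)" "z = ?h M" by blast
  have "\<not> (\<forall>j<d. M j = 0)"
  proof
    assume "\<forall>j<d. M j = 0"
    then have "\<forall>k<d. coords z k = 0" using M(2) by (simp add: coords_mat_vec)
    then show False using z lattice_eq_zero_iff_coords by blast
  qed
  then show "z \<in> ?h ` ?P" using M by blast
next
  fix z assume "z \<in> ?h ` ?P"
  then obtain M where M: "M \<in> ?P" "z = ?h M" by blast
  have L: "z \<in> Defs.lattice d A" unfolding M mem_lattice_iff by blast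
  from M obtain j where j: "j < d" "M j \<noteq> 0" by blast
  then have "coords z j \<noteq> 0" using M by (simp add: coords_mat_vec)
  then have "z \<noteq> (\<lambda>_. 0)" using lattice_eq_zero_iff_coords[OF L] j(1) by blast
  then show "z \<in> Defs.lattice d A - {\<lambda>_. 0}" using L by blast
qed

lemma inj_on_mat_vec_of_int:
  "inj_on (\<lambda>M. mat_vec d A (\<lambda>j. of_int (M j))) (PiE {..<d} (\<lambda>_. UNIV))"
proof
  fix M M' assume MM: "M \<in> PiE {..<d} (\<lambda>_. UNIV)" "M' \<in> PiE {..<d} (\<lambda>_. UNIV)"
    and eq: "mat_vec d A (\<lambda>j. of_int (M j)) = mat_vec d A (\<lambda>j. of_int (M' j))"
  have "M j = M' j" if "j \<in> {..<d}" for j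
    using arg_cong[OF eq, of "\<lambda>z. coords z j"] that by (simp add: coords_mat_vec)
  then show "M = M'" using MM by (intro PiE_ext[of M "{..<d}" "\<lambda>_. UNIV"]) auto
qed

lemma summable_on_vnorm_powr:
  assumes "0 < d" "s > real d"
  shows "(\<lambda>z. vnorm d z powr (-s)) summable_on (Defs.lattice d A - {\<lambda>_. 0})"
proof -
  obtain K where K: "0 < K" "\<And>z j. j < d \<Longrightarrow> \<bar>coords z j\<bar> \<le> K * vnorm d z"
    using obtain_coords_bound by blast
  define h where "h M = mat_vec d A (\<lambda>j. real_of_int (M j))" for M :: "nat \<Rightarrow> int"
  define P where "P = PiE {..<d} (\<lambda>_. UNIV :: int set) - {M. \<forall>j<d. M j = 0}"
  define r where "r = s / real d"
  have r: "r > 1" using assms unfolding r_def by (simp add: field_simps)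
  define g where "g M = (\<Prod>j<d. (1 + real_of_int \<bar>M j\<bar>) powr (-r))" for M :: "nat \<Rightarrow> int"
  have "(\<lambda>M. norm (\<Prod>j<d. (1 + real_of_int \<bar>M j\<bar>) powr (-r))) summable_on PiE {..<d} (\<lambda>_. UNIV :: int set)"
    by (rule summable_on_norm_prod_PiE) (use summable_on_one_plus_abs_powr[OF r] in auto)
  then have "g summable_on PiE {..<d} (\<lambda>_. UNIV :: int set)"
    unfolding g_def by (simp add: prod_nonneg)
  then have majorant: "(\<lambda>M. ((2 * K) powr r) ^ d * g M) summable_on P"
    by (intro summable_on_cmult_right) (rule summable_on_subset, auto simp: P_def)
  have bound: "vnorm d (h M) powr (-s) \<le> ((2 * K) powr r) ^ d * g M" if "M \<in> P" for M
  proof -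
    from that obtain j0 where j0: "j0 < d" "M j0 \<noteq> 0" unfolding P_def by blast
    show ?thesis
      unfolding h_def g_def r_def by (rule vnorm_mat_vec_powr_le[where i=j0]) (use assms K j0 in auto)
  qed
  have "(\<lambda>M. vnorm d (h M) powr (-s)) summable_on P"
    by (rule summable_on_comparison_test[OF majorant]) (use bound in auto)
  moreover have "inj_on h P"
    unfolding h_def P_def by (rule inj_on_subset[OF inj_on_mat_vec_of_int]) blast
  ultimately show ?thesis
    unfolding nonzero_lattice_eq_image h_def[symmetric] P_def[symmetric]
    by (subst summable_on_reindex) (simp_all add: o_def)
qed

end

section \<open>Plane waves on the pyramids\<close>

lemma vdot_cyc_perm:
  assumes "d = Suc m"
  shows "vdot d M (cyc_perm d y) = (\<Sum>k<d. M ((k + 1) mod d) * y k)"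
proof -
  have "vdot d M (cyc_perm d y) = M 0 * y m + (\<Sum>k<m. M (Suc k) * y k)"
    unfolding vdot_def assms by (subst sum.lessThan_Suc_shift) (simp add: cyc_perm_def)
  also have "\<dots> = (\<Sum>k<d. M ((k + 1) mod d) * y k)"
    unfolding assms by (subst sum.lessThan_Suc) (auto intro!: sum.cong)
  finally show ?thesis .
qed

lemma vdot_cyc_perm_pow:
  assumes "0 < d"
  shows "vdot d M ((cyc_perm d ^^ j) x) = (\<Sum>k<d. M ((k + j) mod d) * x k)"
proof (induction j arbitrary: M)
  case 0
  then show ?case unfolding vdot_def by (intro sum.cong) auto
next
  case (Suc j)
  obtain m where m: "d = Suc m" using assms by (cases d) auto
  have "vdot d M ((cyc_perm d ^^ Suc j) x) = vdot d M (cyc_perm d ((cyc_perm d ^^ j) x))" by simp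
  also have "\<dots> = vdot d (\<lambda>k. M ((k + 1) mod d)) ((cyc_perm d ^^ j) x)"
    unfolding vdot_cyc_perm[OF m] by (simp add: vdot_def)
  also have "\<dots> = (\<Sum>k<d. M (((k + j) mod d + 1) mod d) * x k)" by (rule Suc.IH)
  also have "\<dots> = (\<Sum>k<d. M ((k + Suc j) mod d) * x k)"
    by (intro sum.cong refl) (simp add: mod_Suc_eq)
  finally show ?case .
qed

lemma vdot_pyr_vec:
  assumes "d = Suc m"
  shows "vdot d N (pyr_vec d p v) = (\<Sum>l<m. N l * (2 * p l * v l)) + N m"
  unfolding vdot_def assms by (subst sum.lessThan_Suc) (auto simp: pyr_vec_def intro!: sum.cong)

lemma fourier_char_pyramid:
  assumes d: "d = Suc m"
  shows "fourier_char (u * vdot d M ((cyc_perm d ^^ j) (pyr_vec d p v))) =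
    fourier_char (u * M ((m + j) mod d)) * (\<Prod>l<m. fourier_char (2 * u * M ((l + j) mod d) * p l * v l))"
proof -
  have "0 < d" using d by simp
  then have "u * vdot d M ((cyc_perm d ^^ j) (pyr_vec d p v)) =
        u * M ((m + j) mod d) + (\<Sum>l<m. 2 * u * M ((l + j) mod d) * p l * v l)"
    unfolding vdot_cyc_perm_pow[OF \<open>0 < d\<close>] vdot_pyr_vec[OF d, where N="\<lambda>k. M ((k + j) mod d)", unfolded vdot_def]
    by (simp add: sum_distrib_left algebra_simps)
  then show ?thesis by (simp add: fourier_char_add fourier_char_sum)
qed

text \<open>
  The inner integral and the right-hand side of the theorem, with the product of Epstein zeta
  functions replaced by the plane wave \<open>k \<mapsto> exp (-2\<pi>i z \<cdot> k)\<close>, where \<open>M = A\<^sup>-\<^sup>1 z\<close>.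
\<close>
definition pyramid_inner :: "nat \<Rightarrow> (nat \<Rightarrow> real) \<Rightarrow> nat \<Rightarrow> (nat \<Rightarrow> real) \<Rightarrow> real \<Rightarrow> complex" where
  "pyramid_inner d M j p u =
    (LINT v:(PiE {..<d - 1} (\<lambda>_. {0..1/2::real}))|(PiM {..<d - 1} (\<lambda>_. lborel)).
      complex_of_real (u ^ (d - 1)) * fourier_char (u * vdot d M ((cyc_perm d ^^ j) (pyr_vec d p v))))"

definition pyramid_sum :: "nat \<Rightarrow> (nat \<Rightarrow> real) \<Rightarrow> complex" where
  "pyramid_sum d M =
    2 ^ d * (\<Sum>p\<in>PiE {..<d - 1} (\<lambda>_. {-1, 1::real}). \<Sum>j<d. LINT u:{0..1/2}|lborel. pyramid_inner d M j p u)"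

lemma pyramid_inner_eq:
  assumes d: "d = Suc m"
  shows "pyramid_inner d M j p u = of_real (u ^ m) * fourier_char (u * M ((m + j) mod d)) *
     (\<Prod>l<m. LINT x:{0..1/2}|lborel. fourier_char (2 * u * M ((l + j) mod d) * p l * x))"
proof -
  have dm: "d - 1 = m" using d by simp
  let ?V = "PiE {..<m} (\<lambda>_. {0..1/2::real})"
  let ?PM = "PiM {..<m} (\<lambda>_. lborel :: real measure)"
  have "pyramid_inner d M j p u = (LINT v:?V|?PM. of_real (u ^ m) * (fourier_char (u * M ((m + j) mod d)) *
      (\<Prod>l<m. fourier_char (2 * u * M ((l + j) mod d) * p l * v l))))"
    unfolding pyramid_inner_def dm fourier_char_pyramid[OF d] ..
  also have "\<dots> = of_real (u ^ m) * (fourier_char (u * M ((m + j) mod d)) *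
      (LINT v:?V|?PM. (\<Prod>l<m. fourier_char (2 * u * M ((l + j) mod d) * p l * v l))))"
    by (simp only: set_integral_mult_right)
  also have "(LINT v:?V|?PM. (\<Prod>l<m. fourier_char (2 * u * M ((l + j) mod d) * p l * v l)))
     = (\<Prod>l<m. LINT x:{0..1/2}|lborel. fourier_char (2 * u * M ((l + j) mod d) * p l * x))"
    by (rule set_integral_PiE_prod[where f="\<lambda>l x. fourier_char (2 * u * M ((l + j) mod d) * p l * x)"])
       (auto simp: set_integrable_fourier_char)
  finally show ?thesis by (simp only: mult.assoc)
qed

lemma norm_pyramid_inner_le:
  assumes d: "d = Suc m" and u: "u \<in> {0..1/2}"
  shows "norm (pyramid_inner d M j p u) \<le> 1"
proof -
  have "norm (pyramid_inner d M j p u) =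
      \<bar>u\<bar> ^ m * (\<Prod>l<m. norm (LINT x:{0..1/2}|lborel. fourier_char (2 * u * M ((l + j) mod d) * p l * x)))"
    unfolding pyramid_inner_eq[OF d] by (simp add: norm_mult prod_norm norm_power)
  also have "\<dots> \<le> 1 * 1"
  proof (rule mult_mono)
    show "\<bar>u\<bar> ^ m \<le> 1" using u by (intro power_le_one) auto
    show "(\<Prod>l<m. norm (LINT x:{0..1/2}|lborel. fourier_char (2 * u * M ((l + j) mod d) * p l * x))) \<le> 1"
      by (rule prod_le_1) (auto simp: norm_set_integral_fourier_char_le)
  qed (auto intro: prod_nonneg)
  finally show ?thesis by simp
qed

lemma borel_measurable_pyramid_inner:
  assumes d: "d = Suc m"
  shows "pyramid_inner d M j p \<in> borel_measurable lborel"
proof -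
  let ?V = "PiE {..<m} (\<lambda>_. {0..1/2::real})"
  let ?PM = "PiM {..<m} (\<lambda>_. lborel :: real measure)"
  interpret PM: sigma_finite_measure ?PM
    by (rule product_sigma_finite.sigma_finite[OF product_sigma_finite_lborel]) simp
  have [measurable]: "?V \<in> sets ?PM" by (rule sets_PiM_I_finite) auto
  have dm: "d - 1 = m" using d by simp
  have eq: "pyramid_inner d M j p u = integral\<^sup>L ?PM (\<lambda>v. indicator ?V v *\<^sub>R
      (of_real (u ^ m) * (fourier_char (u * M ((m + j) mod d)) *
        (\<Prod>l<m. fourier_char (2 * u * M ((l + j) mod d) * p l * v l)))))" for u
    unfolding pyramid_inner_def set_lebesgue_integral_def dm fourier_char_pyramid[OF d] ..
  show ?thesis unfolding eq by measurable
qed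

lemma set_integrable_pyramid_inner:
  assumes "d = Suc m"
  shows "set_integrable lborel {0..1/2} (pyramid_inner d M j p)"
  unfolding set_integrable_def
  by (rule integrableI_bounded_set_indicator[where B=1, OF _ _ emeasure_compact_finite[OF compact_Icc]])
     (use borel_measurable_pyramid_inner[OF assms] norm_pyramid_inner_le[OF assms] in auto)

lemma norm_set_integral_pyramid_inner_le:
  assumes "d = Suc m"
  shows "norm (LINT u:{0..1/2}|lborel. pyramid_inner d M j p u) \<le> 1"
proof -
  have "norm (LINT u:{0..1/2}|lborel. pyramid_inner d M j p u) \<le> 1 * measure lborel {0..1/2::real}"
    by (rule norm_set_integral_le_measure[OF _ emeasure_compact_finite[OF compact_Icc]])
       (auto simp: set_integrable_pyramid_inner[OF assms] norm_pyramid_inner_le[OF assms])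
  then show ?thesis by simp
qed

lemma norm_pyramid_sum_le:
  assumes "d = Suc m"
  shows "norm (pyramid_sum d M) \<le> 2 ^ d * (\<Sum>p\<in>PiE {..<d - 1} (\<lambda>_. {-1, 1::real}). \<Sum>j<d. 1)"
proof -
  have "norm (pyramid_sum d M) = 2 ^ d *
      norm (\<Sum>p\<in>PiE {..<d - 1} (\<lambda>_. {-1, 1::real}). \<Sum>j<d. LINT u:{0..1/2}|lborel. pyramid_inner d M j p u)"
    unfolding pyramid_sum_def by (simp add: norm_mult norm_power)
  also have "\<dots> \<le> 2 ^ d * (\<Sum>p\<in>PiE {..<d - 1} (\<lambda>_. {-1, 1::real}). \<Sum>j<d. norm (LINT u:{0..1/2}|lborel. pyramid_inner d M j p u))"
    by (intro mult_left_mono order_trans[OF norm_sum] sum_mono norm_sum) auto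
  also have "\<dots> \<le> 2 ^ d * (\<Sum>p\<in>PiE {..<d - 1} (\<lambda>_. {-1, 1::real}). \<Sum>j<d. 1)"
    by (intro mult_left_mono sum_mono norm_set_integral_pyramid_inner_le[OF assms]) auto
  finally show ?thesis .
qed

text \<open>Summing over the signs turns every one-dimensional factor into an integral over \<open>[-u, u]\<close>.\<close>
lemma sum_signs_pyramid_inner:
  assumes d: "d = Suc m"
  shows "2 ^ d * (\<Sum>p\<in>PiE {..<m} (\<lambda>_. {-1, 1::real}). pyramid_inner d M j p u) =
    2 * fourier_char (u * M ((m + j) mod d)) * of_real (\<Prod>l<m. box_fourier (M ((l + j) mod d)) u)"
proof -
  define G where "G l s = (LINT x:{0..1/2}|lborel. fourier_char (2 * u * M ((l + j) mod d) * s * x))" for l s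
  have G: "G l (-1) + G l 1 = of_real (box_fourier (2 * u * M ((l + j) mod d)) (1/2))" for l
    using set_integral_fourier_char_symmetric[of "1/2" "2 * u * M ((l + j) mod d)"]
    by (simp add: G_def add.commute)
  have "(\<Sum>p\<in>PiE {..<m} (\<lambda>_. {-1, 1::real}). pyramid_inner d M j p u) =
      of_real (u ^ m) * fourier_char (u * M ((m + j) mod d)) *
        (\<Sum>p\<in>PiE {..<m} (\<lambda>_. {-1, 1::real}). \<Prod>l<m. G l (p l))"
    unfolding pyramid_inner_eq[OF d] G_def by (simp add: sum_distrib_left)
  also have "(\<Sum>p\<in>PiE {..<m} (\<lambda>_. {-1, 1::real}). \<Prod>l<m. G l (p l)) = (\<Prod>l<m. \<Sum>s\<in>{-1, 1::real}. G l s)"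
    by (rule prod_sum_PiE[symmetric]) auto
  also have "\<dots> = of_real (\<Prod>l<m. box_fourier (2 * u * M ((l + j) mod d)) (1/2))"
    by (simp add: G)
  finally have inner: "(\<Sum>p\<in>PiE {..<m} (\<lambda>_. {-1, 1::real}). pyramid_inner d M j p u) =
      of_real (u ^ m) * fourier_char (u * M ((m + j) mod d)) *
        of_real (\<Prod>l<m. box_fourier (2 * u * M ((l + j) mod d)) (1/2))" .
  have "(2 * u) ^ m * (\<Prod>l<m. box_fourier (2 * u * M ((l + j) mod d)) (1/2)) =
      (\<Prod>l<m. 2 * u * box_fourier (2 * u * M ((l + j) mod d)) (1/2))"
    by (simp add: prod.distrib)
  also have "\<dots> = (\<Prod>l<m. box_fourier (M ((l + j) mod d)) u)"
    by (simp only: box_fourier_rescale)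
  finally have rescale: "(2 * u) ^ m * (\<Prod>l<m. box_fourier (2 * u * M ((l + j) mod d)) (1/2)) =
      (\<Prod>l<m. box_fourier (M ((l + j) mod d)) u)" .
  show ?thesis by (simp only: inner flip: rescale) (simp add: d power_mult_distrib mult_ac)
qed

lemma pyramid_sum_eq:
  assumes d: "d = Suc m"
  shows "pyramid_sum d M = (\<Sum>j<d. LINT u:{0..1/2}|lborel.
    2 * fourier_char (u * M ((m + j) mod d)) * of_real (\<Prod>l<m. box_fourier (M ((l + j) mod d)) u))"
proof -
  have dm: "d - 1 = m" using d by simp
  have "pyramid_sum d M =
      2 ^ d * (\<Sum>j<d. \<Sum>p\<in>PiE {..<m} (\<lambda>_. {-1, 1::real}). LINT u:{0..1/2}|lborel. pyramid_inner d M j p u)"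
    unfolding pyramid_sum_def dm by (subst sum.swap) rule
  also have "\<dots> = (\<Sum>j<d. 2 ^ d *
      (LINT u:{0..1/2}|lborel. \<Sum>p\<in>PiE {..<m} (\<lambda>_. {-1, 1::real}). pyramid_inner d M j p u))"
    by (subst set_integral_sum) (auto intro: set_integrable_pyramid_inner[OF d] simp: sum_distrib_left)
  also have "\<dots> = (\<Sum>j<d. LINT u:{0..1/2}|lborel.
      2 * fourier_char (u * M ((m + j) mod d)) * of_real (\<Prod>l<m. box_fourier (M ((l + j) mod d)) u))"
    by (simp only: set_integral_mult_right[symmetric] sum_signs_pyramid_inner[OF d])
  finally show ?thesis .
qed

lemma inj_on_add_mod: "inj_on (\<lambda>l. (l + j) mod d) {..<d :: nat}"
proof
  fix x y assume x: "x \<in> {..<d}" and y: "y \<in> {..<d}" and eq: "(x + j) mod d = (y + j) mod d"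
  have "d dvd b - a" if "a < b" "(a + j) mod d = (b + j) mod d" for a b :: nat
  proof -
    have "d dvd (b + j) - (a + j)" using that by (subst mod_eq_dvd_iff_nat[symmetric]) auto
    then show ?thesis by simp
  qed
  moreover have "\<not> d dvd b - a" if "a < b" "b < d" for a b :: nat
    using that by (intro nat_dvd_not_less) auto
  ultimately show "x = y" using x y eq by (metis linorder_neqE_nat lessThan_iff)
qed

lemma sum_rotate_mod:
  assumes "d = Suc m"
  shows "(\<Sum>j<d. F ((m + j) mod d)) = (\<Sum>k<d. F k)"
proof -
  have "(\<lambda>j. (j + m) mod d) ` {..<d} = {..<d}"
    by (rule endo_inj_surj[OF _ _ inj_on_add_mod]) (use assms in auto)
  then have "bij_betw (\<lambda>j. (j + m) mod d) {..<d} {..<d}"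
    using inj_on_add_mod by (simp add: bij_betw_def)
  then show ?thesis using sum.reindex_bij_betw by (simp add: add.commute)
qed

lemma prod_rotate_mod:
  assumes d: "d = Suc m"
  shows "(\<Prod>l<m. F ((l + j) mod d)) = (\<Prod>i\<in>{..<d} - {(m + j) mod d}. F i)"
proof -
  let ?r = "\<lambda>l. (l + j) mod d"
  have inj: "inj_on ?r {..<m}" by (rule inj_on_subset[OF inj_on_add_mod]) (use d in auto)
  have sub: "?r ` {..<m} \<subseteq> {..<d} - {(m + j) mod d}"
  proof
    fix x assume "x \<in> ?r ` {..<m}"
    then obtain l where l: "l < m" "x = ?r l" by blast
    have "l = m" if "?r l = ?r m"
      using inj_onD[OF inj_on_add_mod that] l d by auto
    then show "x \<in> {..<d} - {(m + j) mod d}" using l d by auto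
  qed
  have "card (?r ` {..<m}) = card ({..<d} - {(m + j) mod d})"
    using card_image[OF inj] d by simp
  then have "?r ` {..<m} = {..<d} - {(m + j) mod d}"
    by (rule card_subset_eq[OF finite_Diff[OF finite_lessThan] sub])
  then have "bij_betw ?r {..<m} ({..<d} - {(m + j) mod d})"
    using inj by (simp add: bij_betw_def)
  then show ?thesis by (rule prod.reindex_bij_betw)
qed

text \<open>The sum over \<open>k\<close> is the derivative of \<open>\<Prod>\<^sub>i box_fourier (M i) u\<close>.\<close>
lemma set_integral_deriv_prod_box_fourier:
  "(LINT u:{0..1/2}|lborel. \<Sum>k<d. 2 * cos (2 * pi * (u * M k)) * (\<Prod>i\<in>{..<d} - {k}. box_fourier (M i) u)) =
   (\<Prod>i<d. box_fourier (M i) (1/2)) - (\<Prod>i<d. box_fourier (M i) 0)"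
  unfolding set_lebesgue_integral_def
proof (rule integral_FTC_atLeastAtMost)
  fix x :: real
  have "((\<lambda>u. \<Prod>i<d. box_fourier (M i) u) has_derivative
      (\<lambda>y. \<Sum>i<d. (*) (2 * cos (2 * pi * (x * M i))) y * (\<Prod>j\<in>{..<d} - {i}. box_fourier (M j) x)))
      (at x within {0..1/2})"
    by (rule has_derivative_prod) (rule has_real_derivative_box_fourier[unfolded has_field_derivative_def])
  moreover have "(\<lambda>y. \<Sum>i<d. (*) (2 * cos (2 * pi * (x * M i))) y * (\<Prod>j\<in>{..<d} - {i}. box_fourier (M j) x)) =
     (\<lambda>y. y *\<^sub>R (\<Sum>k<d. 2 * cos (2 * pi * (x * M k)) * (\<Prod>i\<in>{..<d} - {k}. box_fourier (M i) x)))"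
    by (simp add: sum_distrib_left mult_ac)
  ultimately show "((\<lambda>u. \<Prod>i<d. box_fourier (M i) u) has_vector_derivative
      (\<Sum>k<d. 2 * cos (2 * pi * (x * M k)) * (\<Prod>i\<in>{..<d} - {k}. box_fourier (M i) x))) (at x within {0..1/2})"
    unfolding has_vector_derivative_def by simp
qed (auto intro!: continuous_intros continuous_on_box_fourier)

lemma set_integral_fourier_char_pair:
  assumes "continuous_on {0..1/2} R"
  shows "(LINT u:{0..1/2}|lborel. 2 * fourier_char (u * b) * of_real (R u)) +
      (LINT u:{0..1/2}|lborel. 2 * fourier_char (- (u * b)) * of_real (R u)) =
    of_real (LINT u:{0..1/2}|lborel. 2 * (2 * cos (2 * pi * (u * b))) * R u)"
proof -
  have "set_integrable lborel {0..1/2} (\<lambda>u. 2 * fourier_char (u * c) * of_real (R u))" for c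
    by (rule borel_integrable_atLeastAtMost')
       (intro continuous_intros continuous_on_compose2[OF continuous_on_fourier_char] assms, auto)
  from this[of b] this[of "- b"]
  have "(LINT u:{0..1/2}|lborel. 2 * fourier_char (u * b) * of_real (R u)) +
      (LINT u:{0..1/2}|lborel. 2 * fourier_char (- (u * b)) * of_real (R u)) =
    (LINT u:{0..1/2}|lborel. 2 * (fourier_char (u * b) + fourier_char (- (u * b))) * of_real (R u))"
    by (subst set_integral_add(2)[symmetric]) (auto simp: algebra_simps)
  also have "\<dots> = (LINT u:{0..1/2}|lborel. complex_of_real (2 * (2 * cos (2 * pi * (u * b))) * R u))"
    by (simp only: fourier_char_add_uminus of_real_mult of_real_numeral)
  finally show ?thesis by (simp only: set_integral_complex_of_real)
qed

lemma pyramid_sum_add_uminus_eq_integral: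
  assumes d: "d = Suc m"
  shows "pyramid_sum d M + pyramid_sum d (\<lambda>k. - M k) = of_real (2 *
    (LINT u:{0..1/2}|lborel. \<Sum>k<d. 2 * cos (2 * pi * (u * M k)) * (\<Prod>i\<in>{..<d} - {k}. box_fourier (M i) u)))"
proof -
  define R where "R j u = (\<Prod>l<m. box_fourier (M ((l + j) mod d)) u)" for j u
  define b where "b j = M ((m + j) mod d)" for j
  have cont: "continuous_on {0..1/2} (R j)" for j
    unfolding R_def by (intro continuous_intros continuous_on_box_fourier)
  have "pyramid_sum d M + pyramid_sum d (\<lambda>k. - M k) =
      (\<Sum>j<d. (LINT u:{0..1/2}|lborel. 2 * fourier_char (u * b j) * of_real (R j u)) +
        (LINT u:{0..1/2}|lborel. 2 * fourier_char (- (u * b j)) * of_real (R j u)))"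
    unfolding pyramid_sum_eq[OF d] R_def b_def sum.distrib by (simp add: box_fourier_uminus)
  also have "\<dots> = of_real (\<Sum>j<d. LINT u:{0..1/2}|lborel. 2 * (2 * cos (2 * pi * (u * b j))) * R j u)"
    by (simp only: set_integral_fourier_char_pair[OF cont] of_real_sum)
  also have "(\<Sum>j<d. LINT u:{0..1/2}|lborel. 2 * (2 * cos (2 * pi * (u * b j))) * R j u) =
      (LINT u:{0..1/2}|lborel. \<Sum>j<d. 2 * (2 * cos (2 * pi * (u * b j))) * R j u)"
    by (rule set_integral_sum[symmetric])
       (intro borel_integrable_atLeastAtMost' continuous_intros cont)
  also have "(\<lambda>u. \<Sum>j<d. 2 * (2 * cos (2 * pi * (u * b j))) * R j u) =
      (\<lambda>u. 2 * (\<Sum>k<d. 2 * cos (2 * pi * (u * M k)) * (\<Prod>i\<in>{..<d} - {k}. box_fourier (M i) u)))"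
  proof
    fix u
    have "(\<Sum>j<d. 2 * (2 * cos (2 * pi * (u * b j))) * R j u) =
       2 * (\<Sum>j<d. (\<lambda>k. 2 * cos (2 * pi * (u * M k)) * (\<Prod>i\<in>{..<d} - {k}. box_fourier (M i) u)) ((m + j) mod d))"
      unfolding R_def b_def sum_distrib_left
      by (intro sum.cong refl) (simp only: mult.assoc prod_rotate_mod[OF d, of "\<lambda>i. box_fourier (M i) u"])
    then show "(\<Sum>j<d. 2 * (2 * cos (2 * pi * (u * b j))) * R j u) =
       2 * (\<Sum>k<d. 2 * cos (2 * pi * (u * M k)) * (\<Prod>i\<in>{..<d} - {k}. box_fourier (M i) u))"
      using sum_rotate_mod[OF d, of "\<lambda>k. 2 * cos (2 * pi * (u * M k)) * (\<Prod>i\<in>{..<d} - {k}. box_fourier (M i) u)"]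
      by simp
  qed
  finally show ?thesis by (simp only: set_integral_mult_right)
qed

text \<open>
  For integer \<open>M\<close> this is twice the integral of the plane wave over the whole cube
  \<open>[-1/2, 1/2]\<^sup>d\<close>, i.e. \<open>2 [M = 0]\<close>.
\<close>
lemma pyramid_sum_add_uminus:
  assumes d: "d = Suc m" and M: "\<forall>k<d. M k \<in> \<int>"
  shows "pyramid_sum d M + pyramid_sum d (\<lambda>k. - M k) = 2 * of_bool (\<forall>k<d. M k = 0)"
proof -
  have "(\<Prod>i<d. box_fourier (M i) (1/2)) = (\<Prod>i<d. of_bool (M i = 0))"
    using M by (intro prod.cong refl) (simp add: box_fourier_half_Ints)
  also have "\<dots> = of_bool (\<forall>k<d. M k = 0)"
    by (induction d) (auto simp: less_Suc_eq)
  finally have half: "(\<Prod>i<d. box_fourier (M i) (1/2)) = of_bool (\<forall>k<d. M k = 0)" .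
  have zero: "(\<Prod>i<d. box_fourier (M i) 0) = 0"
    using d by (simp add: box_fourier_at_0)
  show ?thesis
    unfolding pyramid_sum_add_uminus_eq_integral[OF d] set_integral_deriv_prod_box_fourier half zero
    by simp
qed

section \<open>Expanding the integrand into plane waves\<close>

locale nbody_setting = lattice_basis +
  fixes n :: nat and \<nu> :: "nat \<Rightarrow> complex"
  assumes dim_pos: "0 < d" and Re_nu: "\<forall>i\<in>{1..n}. Re (\<nu> i) > real d"
begin

definition nonzero_lattice :: "(nat \<Rightarrow> real) set" where
  "nonzero_lattice = Defs.lattice d A - {\<lambda>_. 0}"

definition step_tuples :: "(nat \<Rightarrow> nat \<Rightarrow> real) set" where
  "step_tuples = PiE {1..n} (\<lambda>_. nonzero_lattice)"

definition weight :: "(nat \<Rightarrow> nat \<Rightarrow> real) \<Rightarrow> complex" where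
  "weight t = (\<Prod>i=1..n. (of_real (vnorm d (t i)) :: complex) powr (- \<nu> i))"

definition step_sum :: "(nat \<Rightarrow> nat \<Rightarrow> real) \<Rightarrow> nat \<Rightarrow> real" where
  "step_sum t = (\<lambda>l. \<Sum>i\<in>{1..n}. t i l)"

lemma countable_step_tuples: "countable step_tuples"
  unfolding step_tuples_def nonzero_lattice_def using countable_lattice by (intro countable_PiE) auto

lemma step_sum_lattice: "t \<in> step_tuples \<Longrightarrow> step_sum t \<in> Defs.lattice d A"
  unfolding step_sum_def by (rule lattice_sum) (auto simp: step_tuples_def nonzero_lattice_def PiE_iff)

lemma summable_on_norm_powr_vnorm:
  assumes "i \<in> {1..n}"
  shows "(\<lambda>z. norm ((of_real (vnorm d z) :: complex) powr (- \<nu> i))) summable_on nonzero_lattice"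
proof -
  have "norm ((of_real (vnorm d z) :: complex) powr (- \<nu> i)) = vnorm d z powr (- Re (\<nu> i))" for z
    by (subst norm_powr_real_powr) (auto simp: vnorm_def sum_nonneg)
  then show ?thesis
    unfolding nonzero_lattice_def using Re_nu assms dim_pos by (auto intro!: summable_on_vnorm_powr)
qed

lemma summable_on_norm_weight: "(\<lambda>t. norm (weight t)) summable_on step_tuples"
  unfolding weight_def step_tuples_def
  by (rule summable_on_norm_prod_PiE)
     (use countable_lattice summable_on_norm_powr_vnorm in \<open>auto simp: nonzero_lattice_def\<close>)

lemma summable_on_weight_mult:
  "(\<And>t. t \<in> step_tuples \<Longrightarrow> norm (X t) \<le> C) \<Longrightarrow> (\<lambda>t. weight t * X t) summable_on step_tuples"
  by (rule summable_on_mult_bounded[OF summable_on_norm_weight])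

lemma prod_epstein_zeta_eq_infsum:
  "(\<Prod>i=1..n. epstein_zeta d A (\<nu> i) k) =
    (\<Sum>\<^sub>\<infinity>t\<in>step_tuples. weight t * fourier_char (vdot d (step_sum t) k))"
proof -
  define \<phi> where "\<phi> i z = fourier_char (vdot d z k) * (of_real (vnorm d z) :: complex) powr (- \<nu> i)" for i z
  have "(\<Prod>i=1..n. epstein_zeta d A (\<nu> i) k) = (\<Prod>i\<in>{1..n}. infsum (\<phi> i) nonzero_lattice)"
    unfolding epstein_zeta_def \<phi>_def fourier_char_def nonzero_lattice_def ..
  also have "\<dots> = (\<Sum>\<^sub>\<infinity>t\<in>step_tuples. \<Prod>i\<in>{1..n}. \<phi> i (t i))"
    unfolding step_tuples_def
  proof (rule infsum_prod_PiE_abs[symmetric])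
    fix i assume "i \<in> {1..n}"
    then show "(\<lambda>z. norm (\<phi> i z)) summable_on nonzero_lattice"
      using summable_on_norm_powr_vnorm by (simp add: \<phi>_def norm_mult)
  qed simp
  also have "\<dots> = (\<Sum>\<^sub>\<infinity>t\<in>step_tuples. weight t * fourier_char (vdot d (step_sum t) k))"
  proof (rule infsum_cong)
    fix t
    have "(\<Prod>i\<in>{1..n}. \<phi> i (t i)) = fourier_char (\<Sum>i\<in>{1..n}. vdot d (t i) k) * weight t"
      unfolding \<phi>_def weight_def fourier_char_sum prod.distrib ..
    also have "(\<Sum>i\<in>{1..n}. vdot d (t i) k) = vdot d (step_sum t) k"
      unfolding vdot_def step_sum_def sum_distrib_right by (rule sum.swap)
    finally show "(\<Prod>i\<in>{1..n}. \<phi> i (t i)) = weight t * fourier_char (vdot d (step_sum t) k)" by simp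
  qed
  finally show ?thesis .
qed

lemma pyramid_integrand_eq_infsum:
  "complex_of_real (u ^ (d - 1)) *
     (\<Prod>i=1..n. epstein_zeta d A (\<nu> i) (\<lambda>l. u * inv_transpose_apply d A ((cyc_perm d ^^ j) (pyr_vec d p v)) l)) =
   (\<Sum>\<^sub>\<infinity>t\<in>step_tuples. weight t * (complex_of_real (u ^ (d - 1)) *
      fourier_char (u * vdot d (coords (step_sum t)) ((cyc_perm d ^^ j) (pyr_vec d p v)))))"
  unfolding prod_epstein_zeta_eq_infsum vdot_inv_transpose_apply infsum_cmult_right'[symmetric]
  by (simp only: mult_ac)

lemma inner_integral_eq_infsum:
  assumes d: "d = Suc m"
  shows "(LINT v:(PiE {..<d - 1} (\<lambda>_. {0..1/2::real}))|(PiM {..<d - 1} (\<lambda>_. lborel)).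
          complex_of_real (u ^ (d - 1)) *
          (\<Prod>i=1..n. epstein_zeta d A (\<nu> i)
             (\<lambda>l. u * inv_transpose_apply d A ((cyc_perm d ^^ j) (pyr_vec d p v)) l)))
     = (\<Sum>\<^sub>\<infinity>t\<in>step_tuples. weight t * pyramid_inner d (coords (step_sum t)) j p u)"
  unfolding pyramid_inner_def
proof (rule set_integral_infsum[OF countable_step_tuples summable_on_norm_weight])
  show "PiE {..<d - 1} (\<lambda>_. {0..1/2::real}) \<in> sets (PiM {..<d - 1} (\<lambda>_. lborel))"
    by (rule sets_PiM_I_finite) auto
  show "emeasure (PiM {..<d - 1} (\<lambda>_. lborel)) (PiE {..<d - 1} (\<lambda>_. {0..1/2::real})) < \<infinity>"
    by (rule emeasure_PiE_Icc_finite) simp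
  show "(\<lambda>v. complex_of_real (u ^ (d - 1)) * fourier_char (u * vdot d M ((cyc_perm d ^^ j) (pyr_vec d p v))))
     \<in> borel_measurable (PiM {..<d - 1} (\<lambda>_. lborel))" for M
  proof -
    have dm: "d - 1 = m" using d by simp
    show ?thesis unfolding dm fourier_char_pyramid[OF d] by measurable
  qed
  show "norm (complex_of_real (u ^ (d - 1)) * fourier_char (u * vdot d M ((cyc_perm d ^^ j) (pyr_vec d p v))))
      \<le> \<bar>u\<bar> ^ (d - 1)" for M v
    by (simp add: norm_mult norm_power)
  show "complex_of_real (u ^ (d - 1)) *
      (\<Prod>i=1..n. epstein_zeta d A (\<nu> i) (\<lambda>l. u * inv_transpose_apply d A ((cyc_perm d ^^ j) (pyr_vec d p v)) l)) =
    (\<Sum>\<^sub>\<infinity>t\<in>step_tuples. weight t * (complex_of_real (u ^ (d - 1)) *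
      fourier_char (u * vdot d (coords (step_sum t)) ((cyc_perm d ^^ j) (pyr_vec d p v)))))" for v
    by (rule pyramid_integrand_eq_infsum)
qed simp

lemma outer_integral_eq_infsum:
  assumes d: "d = Suc m"
  shows "(LINT u:{0..1/2}|lborel.
        (LINT v:(PiE {..<d - 1} (\<lambda>_. {0..1/2::real}))|(PiM {..<d - 1} (\<lambda>_. lborel)).
          complex_of_real (u ^ (d - 1)) *
          (\<Prod>i=1..n. epstein_zeta d A (\<nu> i)
             (\<lambda>l. u * inv_transpose_apply d A ((cyc_perm d ^^ j) (pyr_vec d p v)) l))))
     = (\<Sum>\<^sub>\<infinity>t\<in>step_tuples. weight t * (LINT u:{0..1/2}|lborel. pyramid_inner d (coords (step_sum t)) j p u))"
  unfolding inner_integral_eq_infsum[OF d]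
  by (rule set_integral_infsum[OF countable_step_tuples summable_on_norm_weight _
        emeasure_compact_finite[OF compact_Icc] borel_measurable_pyramid_inner[OF d]
        norm_pyramid_inner_le[OF d]]) simp_all

lemma rhs_eq_infsum_pyramid_sum:
  assumes d: "d = Suc m"
  shows "2 ^ d * (\<Sum>p\<in>PiE {..<d - 1} (\<lambda>_. {-1, 1::real}). \<Sum>j<d.
      (LINT u:{0..1/2}|lborel.
        (LINT v:(PiE {..<d - 1} (\<lambda>_. {0..1/2::real}))|(PiM {..<d - 1} (\<lambda>_. lborel)).
          complex_of_real (u ^ (d - 1)) *
          (\<Prod>i=1..n. epstein_zeta d A (\<nu> i)
             (\<lambda>l. u * inv_transpose_apply d A ((cyc_perm d ^^ j) (pyr_vec d p v)) l)))))
   = (\<Sum>\<^sub>\<infinity>t\<in>step_tuples. weight t * pyramid_sum d (coords (step_sum t)))"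
proof -
  let ?P = "PiE {..<d - 1} (\<lambda>_. {-1, 1::real})"
  define I where "I t p j = (LINT u:{0..1/2}|lborel. pyramid_inner d (coords (step_sum t)) j p u)" for t p j
  have summable: "(\<lambda>t. weight t * I t p j) summable_on step_tuples" for p j
    by (rule summable_on_weight_mult[where C=1]) (simp add: I_def norm_set_integral_pyramid_inner_le[OF d])
  have "2 ^ d * (\<Sum>p\<in>?P. \<Sum>j<d. \<Sum>\<^sub>\<infinity>t\<in>step_tuples. weight t * I t p j) =
      2 ^ d * (\<Sum>\<^sub>\<infinity>t\<in>step_tuples. \<Sum>p\<in>?P. \<Sum>j<d. weight t * I t p j)"
    using summable by (simp add: infsum_sum summable_on_sum finite_PiE)
  also have "\<dots> = (\<Sum>\<^sub>\<infinity>t\<in>step_tuples. weight t * pyramid_sum d (coords (step_sum t)))"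
    unfolding infsum_cmult_right'[symmetric] pyramid_sum_def I_def
    by (intro infsum_cong) (simp add: sum_distrib_left mult_ac)
  finally show ?thesis unfolding outer_integral_eq_infsum[OF d] I_def .
qed

section \<open>Only closed walks survive\<close>

definition closed_tuples :: "(nat \<Rightarrow> nat \<Rightarrow> real) set" where
  "closed_tuples = {t \<in> step_tuples. step_sum t = (\<lambda>_. 0)}"

definition uminus_tuple :: "(nat \<Rightarrow> nat \<Rightarrow> real) \<Rightarrow> nat \<Rightarrow> nat \<Rightarrow> real" where
  "uminus_tuple t = restrict (\<lambda>i l. - t i l) {1..n}"

lemma bij_betw_uminus_tuple: "bij_betw uminus_tuple step_tuples step_tuples"
proof -
  have "(\<lambda>l. - z l) \<in> nonzero_lattice" if "z \<in> nonzero_lattice" for z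
    using that lattice_uminus[of z d A] by (auto simp: nonzero_lattice_def fun_eq_iff)
  then have sub: "uminus_tuple ` step_tuples \<subseteq> step_tuples"
    unfolding uminus_tuple_def step_tuples_def by (auto simp: restrict_PiE_iff PiE_iff)
  have inv: "\<forall>t\<in>step_tuples. uminus_tuple (uminus_tuple t) = t"
    unfolding uminus_tuple_def step_tuples_def by (auto simp: PiE_iff extensional_def fun_eq_iff)
  show ?thesis by (rule bij_betw_byWitness[OF inv inv sub sub])
qed

lemma weight_uminus_tuple: "weight (uminus_tuple t) = weight t"
  unfolding weight_def uminus_tuple_def by (intro prod.cong refl) (simp add: vnorm_uminus)

lemma step_sum_uminus_tuple: "step_sum (uminus_tuple t) = (\<lambda>l. - step_sum t l)"
  unfolding step_sum_def uminus_tuple_def by (simp add: sum_negf)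

text \<open>The reflection \<open>t \<mapsto> -t\<close> pairs the plane wave of \<open>M\<close> with that of \<open>-M\<close>.\<close>
lemma infsum_pyramid_sum_eq_closed:
  assumes d: "d = Suc m"
  shows "(\<Sum>\<^sub>\<infinity>t\<in>step_tuples. weight t * pyramid_sum d (coords (step_sum t))) = (\<Sum>\<^sub>\<infinity>t\<in>closed_tuples. weight t)"
proof -
  let ?S = "\<lambda>M. pyramid_sum d M"
  let ?M = "\<lambda>t. coords (step_sum t)"
  have bounded: "norm (?S M) \<le> 2 ^ d * (\<Sum>p\<in>PiE {..<d - 1} (\<lambda>_. {-1, 1::real}). \<Sum>j<d. 1)" for M
    by (rule norm_pyramid_sum_le[OF d])
  have s1: "(\<lambda>t. weight t * ?S (?M t)) summable_on step_tuples"
    and s2: "(\<lambda>t. weight t * ?S (\<lambda>k. - ?M t k)) summable_on step_tuples"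
    by (rule summable_on_weight_mult, rule bounded)+
  have "(\<Sum>\<^sub>\<infinity>t\<in>step_tuples. weight t * ?S (?M t)) =
      (\<Sum>\<^sub>\<infinity>t\<in>step_tuples. weight (uminus_tuple t) * ?S (?M (uminus_tuple t)))"
    by (rule infsum_reindex_bij_betw[OF bij_betw_uminus_tuple, symmetric])
  also have "\<dots> = (\<Sum>\<^sub>\<infinity>t\<in>step_tuples. weight t * ?S (\<lambda>k. - ?M t k))"
    by (simp add: weight_uminus_tuple step_sum_uminus_tuple coords_uminus)
  finally have "2 * (\<Sum>\<^sub>\<infinity>t\<in>step_tuples. weight t * ?S (?M t)) =
      (\<Sum>\<^sub>\<infinity>t\<in>step_tuples. weight t * ?S (?M t)) + (\<Sum>\<^sub>\<infinity>t\<in>step_tuples. weight t * ?S (\<lambda>k. - ?M t k))"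
    by simp
  also have "\<dots> = (\<Sum>\<^sub>\<infinity>t\<in>step_tuples. weight t * (?S (?M t) + ?S (\<lambda>k. - ?M t k)))"
    by (subst infsum_add[OF s1 s2, symmetric]) (simp add: distrib_left)
  also have "\<dots> = (\<Sum>\<^sub>\<infinity>t\<in>step_tuples. 2 * (if t \<in> closed_tuples then weight t else 0))"
  proof (rule infsum_cong)
    fix t assume t: "t \<in> step_tuples"
    have L: "step_sum t \<in> Defs.lattice d A" by (rule step_sum_lattice[OF t])
    then have "\<forall>k<d. ?M t k \<in> \<int>" using coords_lattice_Ints by blast
    moreover have "(\<forall>k<d. ?M t k = 0) \<longleftrightarrow> t \<in> closed_tuples"
      unfolding closed_tuples_def using lattice_eq_zero_iff_coords[OF L] t by auto
    ultimately show "weight t * (?S (?M t) + ?S (\<lambda>k. - ?M t k)) = 2 * (if t \<in> closed_tuples then weight t else 0)"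
      by (simp add: pyramid_sum_add_uminus[OF d])
  qed
  also have "\<dots> = 2 * (\<Sum>\<^sub>\<infinity>t\<in>step_tuples. if t \<in> closed_tuples then weight t else 0)"
    by (rule infsum_cmult_right')
  also have "(\<Sum>\<^sub>\<infinity>t\<in>step_tuples. if t \<in> closed_tuples then weight t else 0) = (\<Sum>\<^sub>\<infinity>t\<in>closed_tuples. weight t)"
    by (rule infsum_cong_neutral) (auto simp: closed_tuples_def)
  finally show ?thesis by simp
qed

end

section \<open>Closed walks and the \<open>n\<close>-body configurations\<close>

lemma nbody_point_0 [simp]: "nbody_point n x 0 = (\<lambda>_. 0)"
  by (simp add: nbody_point_def)

lemma nbody_point_n [simp]: "nbody_point n x n = (\<lambda>_. 0)"
  by (simp add: nbody_point_def)

lemma nbody_point_lattice: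
  "x \<in> PiE {1..<n} (\<lambda>_. Defs.lattice d A) \<Longrightarrow> nbody_point n x j \<in> Defs.lattice d A"
  unfolding nbody_point_def using zero_mem_lattice by (auto simp: PiE_iff)

lemma sum_atLeastAtMost_1_diff:
  fixes j :: nat
  assumes "1 \<le> j"
  shows "(\<Sum>i=1..j. f i) - (\<Sum>i=1..j - 1. f i) = (f j :: 'a :: ab_group_add)"
proof -
  obtain k where "j = Suc k" using assms by (cases j) auto
  then show ?thesis by (simp add: sum.cl_ivl_Suc)
qed

context nbody_setting
begin

definition nbody_configs :: "(nat \<Rightarrow> nat \<Rightarrow> real) set" where
  "nbody_configs = {x \<in> PiE {1..<n} (\<lambda>_. Defs.lattice d A).
     \<forall>j\<in>{1..n}. nbody_point n x j \<noteq> nbody_point n x (j - 1)}"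

definition config_steps :: "(nat \<Rightarrow> nat \<Rightarrow> real) \<Rightarrow> nat \<Rightarrow> nat \<Rightarrow> real" where
  "config_steps x = restrict (\<lambda>j l. nbody_point n x j l - nbody_point n x (j - 1) l) {1..n}"

definition partial_sums :: "(nat \<Rightarrow> nat \<Rightarrow> real) \<Rightarrow> nat \<Rightarrow> nat \<Rightarrow> real" where
  "partial_sums t = restrict (\<lambda>j l. \<Sum>i=1..j. t i l) {1..<n}"

lemma config_steps_closed: "x \<in> nbody_configs \<Longrightarrow> config_steps x \<in> closed_tuples"
proof -
  assume "x \<in> nbody_configs"
  then have x: "x \<in> PiE {1..<n} (\<lambda>_. Defs.lattice d A)"
    and ne: "\<forall>j\<in>{1..n}. nbody_point n x j \<noteq> nbody_point n x (j - 1)"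
    by (auto simp: nbody_configs_def)
  have "(\<lambda>l. nbody_point n x j l - nbody_point n x (j - 1) l) \<in> nonzero_lattice" if j: "j \<in> {1..n}" for j
  proof -
    have "(\<lambda>l. nbody_point n x j l - nbody_point n x (j - 1) l) \<noteq> (\<lambda>_. 0)"
      using ne j by (auto simp: fun_eq_iff)
    then show ?thesis
      unfolding nonzero_lattice_def by (auto intro: lattice_diff nbody_point_lattice[OF x])
  qed
  then have "config_steps x \<in> step_tuples"
    unfolding config_steps_def step_tuples_def by (simp add: restrict_PiE_iff)
  moreover have "step_sum (config_steps x) = (\<lambda>_. 0)"
  proof
    fix l
    have "step_sum (config_steps x) l = (\<Sum>i=Suc 0..n. nbody_point n x i l - nbody_point n x (i - 1) l)"
      unfolding step_sum_def config_steps_def by (intro sum.cong) auto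
    also have "\<dots> = 0" by (subst sum_telescope'') simp_all
    finally show "step_sum (config_steps x) l = 0" .
  qed
  ultimately show ?thesis by (simp add: closed_tuples_def)
qed

lemma nbody_point_partial_sums:
  assumes "t \<in> closed_tuples" "j \<le> n"
  shows "nbody_point n (partial_sums t) j = (\<lambda>l. \<Sum>i=1..j. t i l)"
proof -
  have "step_sum t = (\<lambda>_. 0)" using assms(1) by (simp add: closed_tuples_def)
  then have "j = n \<Longrightarrow> (\<lambda>l. \<Sum>i=1..j. t i l) = (\<lambda>_. 0)" by (simp add: step_sum_def)
  then show ?thesis using assms(2) by (auto simp: nbody_point_def partial_sums_def)
qed

lemma partial_sums_nbody_configs: "t \<in> closed_tuples \<Longrightarrow> partial_sums t \<in> nbody_configs"
proof -
  assume t: "t \<in> closed_tuples"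
  then have tL: "t i \<in> Defs.lattice d A" "t i \<noteq> (\<lambda>_. 0)" if "i \<in> {1..n}" for i
    using that by (auto simp: closed_tuples_def step_tuples_def nonzero_lattice_def)
  have "partial_sums t \<in> PiE {1..<n} (\<lambda>_. Defs.lattice d A)"
    unfolding partial_sums_def by (auto simp: restrict_PiE_iff intro!: lattice_sum tL)
  moreover have "nbody_point n (partial_sums t) j \<noteq> nbody_point n (partial_sums t) (j - 1)" if j: "j \<in> {1..n}" for j
  proof
    assume eq: "nbody_point n (partial_sums t) j = nbody_point n (partial_sums t) (j - 1)"
    have pj: "nbody_point n (partial_sums t) j = (\<lambda>l. \<Sum>i=1..j. t i l)"
      using j by (intro nbody_point_partial_sums[OF t]) auto
    have pj': "nbody_point n (partial_sums t) (j - 1) = (\<lambda>l. \<Sum>i=1..j - 1. t i l)"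
      using j by (intro nbody_point_partial_sums[OF t]) auto
    have "t j l = 0" for l
    proof -
      have "t j l = (\<Sum>i=1..j. t i l) - (\<Sum>i=1..j - 1. t i l)"
        by (rule sum_atLeastAtMost_1_diff[symmetric]) (use j in auto)
      also have "\<dots> = 0"
        using fun_cong[OF eq, of l] by (simp only: pj pj')
      finally show ?thesis .
    qed
    then show False using tL(2)[OF j] by auto
  qed
  ultimately show ?thesis by (simp add: nbody_configs_def)
qed

lemma partial_sums_config_steps: "x \<in> nbody_configs \<Longrightarrow> partial_sums (config_steps x) = x"
proof
  fix j assume x: "x \<in> nbody_configs"
  show "partial_sums (config_steps x) j = x j"
  proof (cases "j \<in> {1..<n}")
    case True
    have "partial_sums (config_steps x) j = (\<lambda>l. \<Sum>i=Suc 0..j. nbody_point n x i l - nbody_point n x (i - 1) l)"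
      using True by (auto simp: partial_sums_def config_steps_def intro!: sum.cong)
    also have "\<dots> = x j"
      using True by (subst sum_telescope'') (auto simp: nbody_point_def)
    finally show ?thesis .
  next
    case False
    have "x \<in> PiE {1..<n} (\<lambda>_. Defs.lattice d A)" using x by (simp add: nbody_configs_def)
    then have "x j = undefined" using False by (rule PiE_arb)
    then show ?thesis using False by (auto simp: partial_sums_def)
  qed
qed

lemma config_steps_partial_sums: "t \<in> closed_tuples \<Longrightarrow> config_steps (partial_sums t) = t"
proof
  fix i assume t: "t \<in> closed_tuples"
  show "config_steps (partial_sums t) i = t i"
  proof (cases "i \<in> {1..n}")
    case True
    have "nbody_point n (partial_sums t) i = (\<lambda>l. \<Sum>k=1..i. t k l)"
      using True by (intro nbody_point_partial_sums[OF t]) auto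
    moreover have "nbody_point n (partial_sums t) (i - 1) = (\<lambda>l. \<Sum>k=1..i - 1. t k l)"
      using True by (intro nbody_point_partial_sums[OF t]) auto
    ultimately have "config_steps (partial_sums t) i = (\<lambda>l. (\<Sum>k=1..i. t k l) - (\<Sum>k=1..i - 1. t k l))"
      using True by (simp only: config_steps_def restrict_apply')
    also have "\<dots> = t i"
      using True by (intro ext sum_atLeastAtMost_1_diff) auto
    finally show ?thesis .
  next
    case False
    have "t \<in> step_tuples" using t by (simp add: closed_tuples_def)
    then have "t i = undefined" using False unfolding step_tuples_def by (rule PiE_arb)
    then show ?thesis using False by (auto simp: config_steps_def)
  qed
qed

lemma nbody_zeta_eq_infsum_closed: "nbody_zeta d A n \<nu> = (\<Sum>\<^sub>\<infinity>t\<in>closed_tuples. weight t)"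
proof -
  have bij: "bij_betw config_steps nbody_configs closed_tuples"
  proof (rule bij_betw_byWitness[where f'=partial_sums])
    show "\<forall>x\<in>nbody_configs. partial_sums (config_steps x) = x"
      using partial_sums_config_steps by blast
    show "\<forall>t\<in>closed_tuples. config_steps (partial_sums t) = t"
      using config_steps_partial_sums by blast
    show "config_steps ` nbody_configs \<subseteq> closed_tuples"
      using config_steps_closed by blast
    show "partial_sums ` closed_tuples \<subseteq> nbody_configs"
      using partial_sums_nbody_configs by blast
  qed
  have "nbody_zeta d A n \<nu> = (\<Sum>\<^sub>\<infinity>x\<in>nbody_configs. weight (config_steps x))"
    unfolding nbody_zeta_def nbody_configs_def[symmetric] weight_def config_steps_def
    by (intro infsum_cong prod.cong refl) simp
  also have "\<dots> = (\<Sum>\<^sub>\<infinity>t\<in>closed_tuples. weight t)"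
    by (rule infsum_reindex_bij_betw[OF bij])
  finally show ?thesis .
qed

end

theorem corollary2:
  fixes d n :: nat and A :: "nat \<Rightarrow> nat \<Rightarrow> real" and \<nu> :: "nat \<Rightarrow> complex"
  assumes "d \<ge> 1" and "n \<ge> 1"
    and "mat_det d A \<noteq> 0"
    and "\<forall>i\<in>{1..n}. Re (\<nu> i) > real d"
  shows "nbody_zeta d A n \<nu> =
    2 ^ d * (\<Sum>p\<in>PiE {..<d - 1} (\<lambda>_. {-1, 1::real}). \<Sum>j<d.
      (LINT u:{0..1/2}|lborel.
        (LINT v:(PiE {..<d - 1} (\<lambda>_. {0..1/2::real}))|(PiM {..<d - 1} (\<lambda>_. lborel)).
          complex_of_real (u ^ (d - 1)) *
          (\<Prod>i=1..n. epstein_zeta d A (\<nu> i)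
             (\<lambda>l. u * inv_transpose_apply d A ((cyc_perm d ^^ j) (pyr_vec d p v)) l)))))"
proof -
  obtain B where "\<And>i j. i < d \<Longrightarrow> j < d \<Longrightarrow> (\<Sum>k<d. B i k * A k j) = of_bool (i = j)"
    and "\<And>i j. i < d \<Longrightarrow> j < d \<Longrightarrow> (\<Sum>k<d. A i k * B k j) = of_bool (i = j)"
    using mat_det_nonzero_obtains_inverse[OF assms(3)] by blast
  then interpret nbody_setting d A B n \<nu>
    using assms(1,4) by unfold_locales auto
  obtain m where d: "d = Suc m" using assms(1) by (cases d) auto
  show ?thesis
    by (simp only: nbody_zeta_eq_infsum_closed rhs_eq_infsum_pyramid_sum[OF d] infsum_pyramid_sum_eq_closed[OF d])
qed

end
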